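(* Let $\varphi,g\in C(\mathbb{R})$ with $g$ non-strictly increasing, let $u$ be the entropy solution of $u_t+\varphi(u)_x-g(u)_{xx}=0$ in $\Pi=(0,+\infty)\times\mathbb{R}$ with a $1$-periodic initial function $u_0\in L^\infty(\mathbb{T})$, and $M=\|u\|_\infty$. Let $E\subset(0,+\infty)$ be the set of common Lebesgue points of all the functions $t\mapsto\int_{\mathbb{T}}p(u(t,x))f(x)\,dx$ with $p\in C([-M,M])$ and $f\in L^1(\mathbb{T})$. If $t_0\in E$, then $u(t,\cdot)\to u(t_0,\cdot)$ in $L^1(\mathbb{T})$ as $t\to t_0+$, $t\in E$.
   Context: $\mathbb{T}=\mathbb{R}/\mathbb{Z}$. A fixed representative of $u$ is used, so $u(t,\cdot)$ is defined for every $t$; $E$ has full measure. For $u_0\in L^\infty(\mathbb{R})$, an entropy solution of $u_t+\varphi(u)_x-g(u)_{xx}=0$, $u(0,\cdot)=u_0$, is $u\in L^\infty(\Pi)$ with $g(u)_x\in L^2_{loc}(\Pi)$, such that for every $k\in\mathbb{R}$ and every nonnegative $f\in C_0^\infty(\Pi)$: $\int_\Pi\{|u-k|f_t+\operatorname{sign}(u-k)(\varphi(u)-\varphi(k))f_x+|g(u)-g(k)|f_{xx}\}dtdx\ge0$, and $\operatorname*{ess\,lim}_{t\to0}u(t,\cdot)=u_0$ in $L^1_{loc}(\mathbb{R})$. It exists, is unique, and is $1$-periodic in $x$ if $u_0$ is. *)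

theory Defs
  imports "HOL-Analysis.Analysis"
begin

text \<open>Functions on Pi = (0,+inf) x R are curried: u t x. Points of the plane are pairs (t,x).\<close>

definition Pi_dom :: "(real \<times> real) set" where
  "Pi_dom = {0<..} \<times> UNIV"

definition pt :: "(real \<Rightarrow> real \<Rightarrow> real) \<Rightarrow> real \<Rightarrow> real \<Rightarrow> real" where
  "pt f t x = deriv (\<lambda>s. f s x) t"

definition px :: "(real \<Rightarrow> real \<Rightarrow> real) \<Rightarrow> real \<Rightarrow> real \<Rightarrow> real" where
  "px f t x = deriv (\<lambda>y. f t y) x"

definition test_fun :: "(real \<Rightarrow> real \<Rightarrow> real) \<Rightarrow> bool" where
  "test_fun f \<longleftrightarrow>
     (\<exists>D :: nat \<Rightarrow> nat \<Rightarrow> real \<Rightarrow> real \<Rightarrow> real.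
        D 0 0 = f \<and>
        (\<forall>i j t x. ((\<lambda>s. D i j s x) has_real_derivative D (Suc i) j t x) (at t) \<and>
                   ((\<lambda>y. D i j t y) has_real_derivative D i (Suc j) t x) (at x)) \<and>
        (\<forall>i j. continuous_on UNIV (\<lambda>z. D i j (fst z) (snd z)))) \<and>
     (\<exists>K. compact K \<and> K \<subseteq> Pi_dom \<and> (\<forall>t x. (t, x) \<notin> K \<longrightarrow> f t x = 0))"

definition Linf_Pi :: "(real \<Rightarrow> real \<Rightarrow> real) \<Rightarrow> bool" where
  "Linf_Pi u \<longleftrightarrow> set_borel_measurable lebesgue Pi_dom (\<lambda>z. u (fst z) (snd z)) \<and>
     (\<exists>C. AE z in lebesgue. z \<in> Pi_dom \<longrightarrow> \<bar>u (fst z) (snd z)\<bar> \<le> C)"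

definition ess_norm_Pi :: "(real \<Rightarrow> real \<Rightarrow> real) \<Rightarrow> real" where
  "ess_norm_Pi u = Inf {C. AE z in lebesgue. z \<in> Pi_dom \<longrightarrow> \<bar>u (fst z) (snd z)\<bar> \<le> C}"

definition weak_dx_L2loc :: "(real \<Rightarrow> real \<Rightarrow> real) \<Rightarrow> bool" where
  "weak_dx_L2loc w \<longleftrightarrow>
     (\<exists>v :: real \<Rightarrow> real \<Rightarrow> real.
        set_borel_measurable lebesgue Pi_dom (\<lambda>z. v (fst z) (snd z)) \<and>
        (\<forall>K. compact K \<and> K \<subseteq> Pi_dom \<longrightarrow>
              set_integrable lebesgue K (\<lambda>z. (v (fst z) (snd z))\<^sup>2)) \<and>
        (\<forall>f. test_fun f \<longrightarrow>
           (LINT z:Pi_dom|lebesgue. w (fst z) (snd z) * px f (fst z) (snd z))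
             = - (LINT z:Pi_dom|lebesgue. v (fst z) (snd z) * f (fst z) (snd z))))"

definition entropy_solution ::
  "(real \<Rightarrow> real) \<Rightarrow> (real \<Rightarrow> real) \<Rightarrow> (real \<Rightarrow> real) \<Rightarrow> (real \<Rightarrow> real \<Rightarrow> real) \<Rightarrow> bool" where
  "entropy_solution \<phi> g u0 u \<longleftrightarrow>
     Linf_Pi u \<and>
     weak_dx_L2loc (\<lambda>t x. g (u t x)) \<and>
     (\<forall>k f. test_fun f \<and> (\<forall>t x. f t x \<ge> 0) \<longrightarrow>
        (LINT z:Pi_dom|lebesgue.
            (let t = fst z; x = snd z in
               \<bar>u t x - k\<bar> * pt f t x
               + sgn (u t x - k) * (\<phi> (u t x) - \<phi> k) * px f t x
               + \<bar>g (u t x) - g k\<bar> * px (px f) t x)) \<ge> 0) \<and>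
     (\<exists>N. N \<in> null_sets lborel \<and>
        (\<forall>a b. ((\<lambda>t. LINT x:{a..b}|lebesgue. \<bar>u t x - u0 x\<bar>) \<longlongrightarrow> 0)
                 (at 0 within ({0<..} - N))))"

definition lebesgue_point :: "(real \<Rightarrow> real) \<Rightarrow> real \<Rightarrow> bool" where
  "lebesgue_point I t0 \<longleftrightarrow>
     (\<forall>\<^sub>F h in at_right 0. set_integrable lebesgue {t0 - h..t0 + h} I) \<and>
     ((\<lambda>h. (1 / (2 * h)) * (LINT s:{t0 - h..t0 + h}|lebesgue. \<bar>I s - I t0\<bar>)) \<longlongrightarrow> 0) (at_right 0)"

text \<open>E: common Lebesgue points in (0,inf) of t \<mapsto> \<integral>_T p(u(t,x)) f(x) dx,
  p \<in> C([-M,M]), f \<in> L^1(T); the torus T is represented by the period [0,1].\<close>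
definition common_lebesgue_points :: "(real \<Rightarrow> real \<Rightarrow> real) \<Rightarrow> real \<Rightarrow> real set" where
  "common_lebesgue_points u M =
     {t0. t0 > 0 \<and>
        (\<forall>p f. continuous_on {-M..M} p \<and> set_integrable lebesgue {0..1} f \<longrightarrow>
           lebesgue_point (\<lambda>t. LINT x:{0..1}|lebesgue. p (u t x) * f x) t0)}"

end

theory Submission
  imports Defs "HOL-Computational_Algebra.Polynomial"
begin

(* Testing the entropy inequality with products kappa(t) psi(x), where kappa is a smoothed
   indicator of [t1, t2] and psi >= 0 is supported in [0, 1], shows that at common Lebesgue
   points t1 < t2 the quantity int |u(t) - k| psi grows at most linearly:
   int |u(t2) - k| psi <= int |u(t1) - k| psi + C (t2 - t1).
   Approximating indicators of intervals by smooth psi gives upper semicontinuity from the right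
   of int_I |u(t) - k|.  For k = M and k = -M this controls int_I u(t) from both sides, so
   u(t) -> u(t0) weakly on intervals, hence (Dynkin) on all measurable sets.  Finally, cut the
   range [-M, M] into cells of width d: |u(t) - u(t0)| is at most d plus a sum of terms
   |u(t) - k| + (1_{u(t0) < k} - 1_{u(t0) >= k + d}) (u(t) - k), each of whose integrals is upper
   semicontinuous from the right and whose sum vanishes up to d at t = t0. *)

section \<open>Smooth functions\<close>

coinductive smooth :: "(real \<Rightarrow> real) \<Rightarrow> bool" where
  smoothI: "(\<And>x. (F has_real_derivative F' x) (at x)) \<Longrightarrow> smooth F' \<Longrightarrow> smooth F"

lemma smooth_deriv:
  assumes "smooth F"
  shows "(F has_real_derivative deriv F x) (at x)" "smooth (deriv F)"
proof -
  from assms obtain F' where d: "\<And>x. (F has_real_derivative F' x) (at x)" and s: "smooth F'"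
    by (cases rule: smooth.cases) blast
  have "deriv F = F'" using d by (intro ext DERIV_imp_deriv) auto
  then show "(F has_real_derivative deriv F x) (at x)" "smooth (deriv F)" using d s by auto
qed

lemma smooth_higher_deriv:
  assumes "smooth F"
  shows "smooth ((deriv ^^ n) F)" "((deriv ^^ n) F has_real_derivative (deriv ^^ Suc n) F x) (at x)"
proof -
  show s: "smooth ((deriv ^^ n) F)" for n by (induction n) (auto simp: assms smooth_deriv)
  show "((deriv ^^ n) F has_real_derivative (deriv ^^ Suc n) F x) (at x)"
    using smooth_deriv(1)[OF s[of n]] by simp
qed

lemma smooth_imp_continuous_on: "smooth F \<Longrightarrow> continuous_on S F"
  by (meson DERIV_isCont continuous_at_imp_continuous_on smooth_deriv(1))

lemma smooth_imp_borel_measurable: "smooth F \<Longrightarrow> F \<in> borel_measurable borel"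
  by (intro borel_measurable_continuous_onI smooth_imp_continuous_on)

lemma smooth_const: "smooth (\<lambda>x. c)"
proof -
  have "\<exists>c. F = (\<lambda>x. c) \<Longrightarrow> smooth F" for F
  proof (coinduction arbitrary: F rule: smooth.coinduct)
    case smooth
    then obtain c where "F = (\<lambda>x. c)" by auto
    moreover have "\<And>x. ((\<lambda>x. c) has_real_derivative 0) (at x)" by simp
    ultimately show ?case by (intro exI[of _ F] exI[of _ "\<lambda>x. 0"]) (auto intro: exI[of _ 0])
  qed
  then show ?thesis by auto
qed

lemma smooth_affine:
  assumes "smooth F" shows "smooth (\<lambda>x. c * F (a * x + b))"
proof -
  have "\<exists>F c. smooth F \<and> H = (\<lambda>x. c * F (a * x + b)) \<Longrightarrow> smooth H" for H
  proof (coinduction arbitrary: H rule: smooth.coinduct)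
    case smooth
    then obtain F c where F: "smooth F" and H: "H = (\<lambda>x. c * F (a * x + b))" by auto
    have "((\<lambda>x. c * F (a * x + b)) has_real_derivative (c * a) * deriv F (a * x + b)) (at x)" for x
    proof -
      have "((\<lambda>x. F (a * x + b)) has_real_derivative deriv F (a * x + b) * a) (at x)"
        by (rule DERIV_chain2[OF smooth_deriv(1)[OF F]]) (auto intro!: derivative_eq_intros)
      from DERIV_cmult[OF this, of c] show ?thesis by (simp add: ac_simps)
    qed
    then show ?case using H F smooth_deriv(2)[OF F]
      by (intro exI[of _ H] exI[of _ "\<lambda>x. (c * a) * deriv F (a * x + b)"]) blast
  qed
  then show ?thesis using assms by blast
qed

(* The derivative of a product is a sum of products, so closure under products is proved
   coinductively for finite sums of products of smooth functions. *)
definition sum_prods :: "((real \<Rightarrow> real) \<times> (real \<Rightarrow> real)) list \<Rightarrow> real \<Rightarrow> real" where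
  "sum_prods ps x = (\<Sum>p\<leftarrow>ps. fst p x * snd p x)"

definition sum_prods_deriv ::
  "((real \<Rightarrow> real) \<times> (real \<Rightarrow> real)) list \<Rightarrow> ((real \<Rightarrow> real) \<times> (real \<Rightarrow> real)) list" where
  "sum_prods_deriv ps = concat (map (\<lambda>p. [(deriv (fst p), snd p), (fst p, deriv (snd p))]) ps)"

lemma sum_prods_has_deriv:
  assumes "\<forall>p\<in>set ps. smooth (fst p) \<and> smooth (snd p)"
  shows "(sum_prods ps has_real_derivative sum_prods (sum_prods_deriv ps) x) (at x)"
  using assms
proof (induction ps)
  case Nil then show ?case by (simp add: sum_prods_def sum_prods_deriv_def)
next
  case (Cons p ps)
  have "((\<lambda>x. fst p x * snd p x) has_real_derivative
      deriv (fst p) x * snd p x + fst p x * deriv (snd p) x) (at x)"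
    using Cons.prems by (auto intro!: derivative_eq_intros smooth_deriv)
  from DERIV_add[OF this Cons.IH] Cons.prems show ?case
    by (simp add: sum_prods_def sum_prods_deriv_def algebra_simps)
qed

lemma smooth_sum_prods:
  assumes "\<forall>p\<in>set ps. smooth (fst p) \<and> smooth (snd p)"
  shows "smooth (sum_prods ps)"
proof -
  have "\<exists>ps. (\<forall>p\<in>set ps. smooth (fst p) \<and> smooth (snd p)) \<and> H = sum_prods ps \<Longrightarrow> smooth H" for H
  proof (coinduction arbitrary: H rule: smooth.coinduct)
    case smooth
    then obtain ps where ps: "\<forall>p\<in>set ps. smooth (fst p) \<and> smooth (snd p)" and H: "H = sum_prods ps"
      by auto
    have "\<forall>p\<in>set (sum_prods_deriv ps). smooth (fst p) \<and> smooth (snd p)"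
      using ps by (auto simp: sum_prods_deriv_def smooth_deriv)
    then show ?case using sum_prods_has_deriv[OF ps] H by blast
  qed
  then show ?thesis using assms by blast
qed

lemma smooth_mult: "smooth F \<Longrightarrow> smooth G \<Longrightarrow> smooth (\<lambda>x. F x * G x)"
  using smooth_sum_prods[of "[(F, G)]"] by (simp add: sum_prods_def[abs_def])

lemma smooth_add: "smooth F \<Longrightarrow> smooth G \<Longrightarrow> smooth (\<lambda>x. F x + G x)"
  using smooth_sum_prods[of "[(F, \<lambda>x. 1), (G, \<lambda>x. 1)]"] smooth_const by (simp add: sum_prods_def[abs_def])

lemma smooth_deriv_eq_0_outside:
  assumes "smooth F" "\<And>x. x \<notin> {a..b} \<Longrightarrow> F x = 0" "x \<notin> {a..b}"
  shows "deriv F x = 0"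
proof -
  have "(F has_real_derivative 0) (at x)"
  proof (rule has_field_derivative_transform_within_open[where S="- {a..b}"])
    show "((\<lambda>_. 0) has_real_derivative 0) (at x)" by simp
  qed (use assms in auto)
  then show ?thesis by (rule DERIV_imp_deriv)
qed

lemma continuous_vanishing_outside_bounded:
  fixes F :: "real \<Rightarrow> real"
  assumes "continuous_on UNIV F" "\<And>x. x \<notin> {a..b} \<Longrightarrow> F x = 0"
  obtains B where "\<And>x. \<bar>F x\<bar> \<le> B"
proof -
  have "compact (F ` {a..b})"
    by (intro compact_continuous_image continuous_on_subset[OF assms(1)]) auto
  then obtain B where B: "\<And>y. y \<in> F ` {a..b} \<Longrightarrow> norm y \<le> B"
    by (meson bounded_iff compact_imp_bounded)
  have "\<bar>F x\<bar> \<le> max B 0" for x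
    using B[of "F x"] assms(2)[of x] by (cases "x \<in> {a..b}") auto
  then show ?thesis by (rule that)
qed

lemma smooth_vanishing_outside_bounded:
  assumes "smooth F" "\<And>x. x \<notin> {a..b} \<Longrightarrow> F x = 0"
  obtains B where "\<And>x. \<bar>F x\<bar> \<le> B"
  using continuous_vanishing_outside_bounded[OF smooth_imp_continuous_on[OF assms(1)] assms(2)] by blast

lemma poly_times_exp_tendsto_0: "((\<lambda>y. poly p y * exp (- y)) \<longlongrightarrow> (0::real)) at_top"
proof -
  have "((\<lambda>y. \<Sum>i\<le>degree p. coeff p i * (y ^ i / exp y)) \<longlongrightarrow> (\<Sum>i\<le>degree p. coeff p i * 0)) at_top"
    by (intro tendsto_sum tendsto_mult tendsto_const tendsto_power_div_exp_0)
  moreover have "(\<Sum>i\<le>degree p. coeff p i * (y ^ i / exp y)) = poly p y * exp (- y)" for y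
    by (simp add: poly_altdef sum_distrib_right exp_minus divide_inverse mult.assoc)
  ultimately show ?thesis by simp
qed

(* Derivatives of exp_flat p are again of the form exp_flat q, so smoothness is coinductive. *)
definition exp_flat :: "real poly \<Rightarrow> real \<Rightarrow> real" where
  "exp_flat p x = (if x > 0 then poly p (1/x) * exp (- (1/x)) else 0)"

lemma exp_flat_has_deriv:
  "(exp_flat p has_real_derivative exp_flat ([:0,0,1:] * (p - pderiv p)) x) (at x)"
proof -
  consider "x > 0" | "x < 0" | "x = 0" by linarith
  then show ?thesis
  proof cases
    case 1
    have "((\<lambda>x. poly p (1/x) * exp (- (1/x))) has_real_derivative
         poly (pderiv p) (1/x) * (- 1 / x^2) * exp (- (1/x)) + poly p (1/x) * (exp (- (1/x)) * (1/x^2))) (at x)"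
      using 1 by (auto intro!: derivative_eq_intros DERIV_chain2[where f="poly p", OF poly_DERIV]
          simp: power2_eq_square)
    moreover have "poly (pderiv p) (1/x) * (- 1 / x^2) * exp (- (1/x)) + poly p (1/x) * (exp (- (1/x)) * (1/x^2))
       = exp_flat ([:0,0,1:] * (p - pderiv p)) x"
      using 1 by (simp add: exp_flat_def algebra_simps power2_eq_square divide_inverse)
    ultimately have "((\<lambda>x. poly p (1/x) * exp (- (1/x))) has_real_derivative
        exp_flat ([:0,0,1:] * (p - pderiv p)) x) (at x)"
      by simp
    then show ?thesis
      by (rule has_field_derivative_transform_within_open[where S="{0<..}"]) (use 1 in \<open>auto simp: exp_flat_def\<close>)
  next
    case 2
    have "((\<lambda>x. 0) has_real_derivative exp_flat ([:0,0,1:] * (p - pderiv p)) x) (at x)"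
      using 2 by (simp add: exp_flat_def)
    then show ?thesis
      by (rule has_field_derivative_transform_within_open[where S="{..<0}"]) (use 2 in \<open>auto simp: exp_flat_def\<close>)
  next
    case 3
    have "((\<lambda>y. poly (p * [:0,1:]) y * exp (- y)) \<longlongrightarrow> 0) at_top"
      by (rule poly_times_exp_tendsto_0)
    from filterlim_compose[OF this filterlim_inverse_at_top_right]
    have right: "((\<lambda>y. poly p (1/y) * exp (- (1/y)) / y) \<longlongrightarrow> 0) (at_right 0)"
      by (simp add: divide_inverse ac_simps)
    have "((\<lambda>y. (exp_flat p y - exp_flat p 0) / (y - 0)) \<longlongrightarrow> 0) (at 0)"
    proof (rule filterlim_split_at_real)
      show "((\<lambda>y. (exp_flat p y - exp_flat p 0) / (y - 0)) \<longlongrightarrow> 0) (at_left 0)"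
        by (rule tendsto_eventually, rule eventually_mono[OF eventually_at_left_real[of "-1" 0]])
          (auto simp: exp_flat_def)
      show "((\<lambda>y. (exp_flat p y - exp_flat p 0) / (y - 0)) \<longlongrightarrow> 0) (at_right 0)"
        by (rule Lim_transform_eventually[OF right],
            rule eventually_mono[OF eventually_at_right_real[of 0 1]]) (auto simp: exp_flat_def)
    qed
    then show ?thesis using 3 by (simp add: has_field_derivative_iff exp_flat_def)
  qed
qed

lemma smooth_exp_flat: "smooth (exp_flat p)"
proof -
  have "\<exists>p. H = exp_flat p \<Longrightarrow> smooth H" for H
  proof (coinduction arbitrary: H rule: smooth.coinduct)
    case smooth
    then obtain p where "H = exp_flat p" by auto
    then show ?case using exp_flat_has_deriv[of p]
      by (intro exI[of _ H] exI[of _ "exp_flat ([:0,0,1:] * (p - pderiv p))"]) blast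
  qed
  then show ?thesis by blast
qed

definition bump :: "real \<Rightarrow> real" where
  "bump x = exp_flat 1 (1 + x) * exp_flat 1 (1 - x)"

lemma smooth_bump: "smooth bump"
proof -
  have "smooth (\<lambda>x. 1 * exp_flat 1 (1 * x + 1))" "smooth (\<lambda>x. 1 * exp_flat 1 ((-1) * x + 1))"
    by (intro smooth_affine smooth_exp_flat)+
  then have "smooth (\<lambda>x. exp_flat 1 (1 + x) * exp_flat 1 (1 - x))"
    using smooth_mult by (simp add: ac_simps)
  then show ?thesis unfolding bump_def[abs_def] .
qed

lemma bump_nonneg: "0 \<le> bump x"
  by (simp add: bump_def exp_flat_def)

lemma bump_le_1: "bump x \<le> 1"
  by (auto simp: bump_def exp_flat_def mult_le_one)

lemma bump_eq_0: "x \<le> -1 \<or> x \<ge> 1 \<Longrightarrow> bump x = 0"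
  by (auto simp: bump_def exp_flat_def)

lemma continuous_on_bump: "continuous_on S bump"
  by (rule smooth_imp_continuous_on[OF smooth_bump])

lemma bump_ge: "\<bar>x\<bar> \<le> 1/2 \<Longrightarrow> exp (-4) \<le> bump x"
proof -
  assume x: "\<bar>x\<bar> \<le> 1/2"
  have "exp (-2) \<le> exp (- (1 / (1 + x)))" "exp (-2) \<le> exp (- (1 / (1 - x)))"
    using x by (auto simp: field_simps)
  then have "exp (-2) * exp (-2) \<le> exp (- (1 / (1 + x))) * exp (- (1 / (1 - x)))"
    by (intro mult_mono) auto
  moreover have "exp (-2) * exp (-2) = exp (-4::real)" by (simp add: exp_add[symmetric])
  moreover have "0 < 1 + x" "x < 1" using x by auto
  ultimately show ?thesis by (simp add: bump_def exp_flat_def)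
qed

lemma bump_integrable_on: "bump integrable_on {a..b}"
  by (intro integrable_continuous_interval continuous_on_bump)

definition bump_mass :: real where
  "bump_mass = integral {-3..1} bump"

lemma bump_mass_pos: "bump_mass > 0"
proof -
  have "exp (-4) = integral {-1/2..1/2::real} (\<lambda>x. exp (-4))"
    by simp
  also have "\<dots> \<le> integral {-1/2..1/2} bump"
    by (intro integral_le bump_integrable_on) (auto intro: bump_ge)
  also have "\<dots> \<le> bump_mass" unfolding bump_mass_def
    by (intro integral_subset_le bump_integrable_on) (auto simp: bump_nonneg)
  finally show ?thesis by (smt (verit) exp_gt_zero)
qed

definition smooth_step :: "real \<Rightarrow> real" where
  "smooth_step x = integral {-3..x} bump / bump_mass"

lemma smooth_step_eq_0: "x \<le> -1 \<Longrightarrow> smooth_step x = 0"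
proof -
  assume x: "x \<le> -1"
  have "integral {-3..x} bump = integral {-3..x} (\<lambda>_. 0::real)"
    by (intro integral_cong) (use x in \<open>auto intro: bump_eq_0\<close>)
  then show ?thesis by (simp add: smooth_step_def)
qed

lemma smooth_step_eq_1: "x \<ge> 1 \<Longrightarrow> smooth_step x = 1"
proof -
  assume x: "x \<ge> 1"
  have "integral {-3..1} bump + integral {1..x} bump = integral {-3..x} bump"
    using x by (intro Henstock_Kurzweil_Integration.integral_combine[OF _ _ bump_integrable_on]) auto
  moreover have "integral {1..x} bump = integral {1..x} (\<lambda>_. 0::real)"
    by (intro integral_cong) (auto intro: bump_eq_0)
  ultimately show ?thesis using bump_mass_pos by (simp add: smooth_step_def bump_mass_def)
qed

lemma smooth_step_has_deriv: "(smooth_step has_real_derivative bump x / bump_mass) (at x)"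
proof (cases "x < -2")
  case True
  have "((\<lambda>_. 0) has_real_derivative bump x / bump_mass) (at x)"
    using True by (simp add: bump_eq_0)
  then show ?thesis
    by (rule has_field_derivative_transform_within_open[where S="{..<-1}"])
      (use True in \<open>auto simp: smooth_step_eq_0\<close>)
next
  case False
  have "((\<lambda>y. integral {-3..y} bump) has_real_derivative bump x) (at x within {-3..x+1})"
    using False by (intro integral_has_real_derivative continuous_on_bump) auto
  then have "((\<lambda>y. integral {-3..y} bump) has_real_derivative bump x) (at x)"
    using False by (subst (asm) at_within_interior) (auto simp: interior_atLeastAtMost_real)
  then show ?thesis unfolding smooth_step_def[abs_def] by (intro DERIV_cdivide)
qed

lemma smooth_smooth_step: "smooth smooth_step"
proof (rule smoothI[OF smooth_step_has_deriv])
  show "smooth (\<lambda>x. bump x / bump_mass)"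
    using smooth_affine[OF smooth_bump, of "1/bump_mass" 1 0] by simp
qed

lemma smooth_step_mono: "x \<le> y \<Longrightarrow> smooth_step x \<le> smooth_step y"
  by (rule DERIV_nonneg_imp_nondecreasing[of x y smooth_step])
    (use smooth_step_has_deriv bump_mass_pos bump_nonneg in \<open>auto intro!: exI\<close>)

lemma smooth_step_bounds: "0 \<le> smooth_step x" "smooth_step x \<le> 1"
  using smooth_step_mono[of "-1" x] smooth_step_mono[of x 1] smooth_step_eq_0[of "-1"] smooth_step_eq_1[of 1]
  by (cases "x \<le> -1"; cases "x \<le> 1"; auto simp: smooth_step_eq_0 smooth_step_eq_1)+

definition mollifier :: "real \<Rightarrow> real \<Rightarrow> real \<Rightarrow> real" where
  "mollifier \<tau> h s = bump ((s - \<tau>) / h) / (bump_mass * h)"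

lemma mollifier_nonneg: "0 < h \<Longrightarrow> 0 \<le> mollifier \<tau> h s"
  using bump_mass_pos bump_nonneg by (simp add: mollifier_def)

lemma mollifier_le: "0 < h \<Longrightarrow> mollifier \<tau> h s \<le> (1 / (bump_mass * h)) * indicator {\<tau>-h..\<tau>+h} s"
proof (cases "s \<in> {\<tau>-h..\<tau>+h}")
  case True
  assume h: "0 < h"
  then have "mollifier \<tau> h s \<le> 1 / (bump_mass * h)" unfolding mollifier_def
    using bump_mass_pos by (intro divide_right_mono bump_le_1) simp
  then show ?thesis using True by simp
next
  case False
  assume h: "0 < h"
  then have "(s - \<tau>) / h \<le> -1 \<or> (s - \<tau>) / h \<ge> 1" using False by (auto simp: field_simps)
  then show ?thesis using False by (simp add: mollifier_def bump_eq_0)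
qed

lemma continuous_on_mollifier: "continuous_on UNIV (mollifier \<tau> h)"
  unfolding mollifier_def[abs_def] divide_inverse
  by (intro continuous_intros continuous_on_compose2[OF continuous_on_bump[of UNIV]]) auto

lemma borel_measurable_mollifier[measurable]: "mollifier \<tau> h \<in> borel_measurable borel"
  by (intro borel_measurable_continuous_onI continuous_on_mollifier)

lemma smooth_step_scaled_has_deriv:
  "0 < h \<Longrightarrow> ((\<lambda>s. smooth_step ((s - \<tau>) / h)) has_real_derivative mollifier \<tau> h s) (at s)"
proof -
  assume h: "0 < h"
  have "((\<lambda>s. smooth_step ((s - \<tau>) / h)) has_real_derivative bump ((s - \<tau>) / h) / bump_mass * (1 / h)) (at s)"
    by (rule DERIV_chain2[OF smooth_step_has_deriv]) (use h in \<open>auto intro!: derivative_eq_intros\<close>)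
  then show ?thesis by (simp add: mollifier_def)
qed

lemma integral_mollifier: "0 < h \<Longrightarrow> (\<integral>s. mollifier \<tau> h s \<partial>lborel) = 1"
proof -
  assume h: "0 < h"
  have "(\<lambda>s. indicator {\<tau>-h..\<tau>+h} s *\<^sub>R mollifier \<tau> h s) = mollifier \<tau> h"
  proof
    fix s show "indicator {\<tau>-h..\<tau>+h} s *\<^sub>R mollifier \<tau> h s = mollifier \<tau> h s"
      using mollifier_le[OF h, of \<tau> s] mollifier_nonneg[OF h, of \<tau> s]
      by (cases "s \<in> {\<tau>-h..\<tau>+h}") auto
  qed
  moreover have "integral\<^sup>L lborel (\<lambda>s. indicator {\<tau>-h..\<tau>+h} s *\<^sub>R mollifier \<tau> h s)
      = smooth_step (((\<tau>+h) - \<tau>) / h) - smooth_step (((\<tau>-h) - \<tau>) / h)"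
  proof (rule integral_FTC_atLeastAtMost)
    show "continuous_on {\<tau> - h..\<tau> + h} (mollifier \<tau> h)"
      using continuous_on_mollifier by (rule continuous_on_subset) auto
    fix x
    show "((\<lambda>s. smooth_step ((s - \<tau>) / h)) has_vector_derivative mollifier \<tau> h x) (at x within {\<tau> - h..\<tau> + h})"
      using smooth_step_scaled_has_deriv[OF h, of \<tau> x]
      by (simp add: has_real_derivative_iff_has_vector_derivative has_vector_derivative_at_within)
  qed (use h in simp)
  ultimately show ?thesis using h by (simp add: smooth_step_eq_1 smooth_step_eq_0)
qed

definition plateau :: "real \<Rightarrow> real \<Rightarrow> real \<Rightarrow> real \<Rightarrow> real" where
  "plateau a b e x = smooth_step ((2/e) * x + (- 2 * a / e - 1)) * smooth_step ((-2/e) * x + (2 * b / e - 1))"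

lemma smooth_plateau: "smooth (plateau a b e)"
proof -
  have "plateau a b e = (\<lambda>x. (1 * smooth_step ((2/e) * x + (- 2 * a / e - 1)))
      * (1 * smooth_step ((-2/e) * x + (2 * b / e - 1))))"
    by (auto simp: plateau_def fun_eq_iff)
  then show ?thesis by (simp only:) (intro smooth_mult smooth_affine smooth_smooth_step)
qed

lemma plateau_bounds: "0 \<le> plateau a b e x" "plateau a b e x \<le> 1"
  unfolding plateau_def
  using smooth_step_bounds[of "(2/e) * x + (- 2 * a / e - 1)"] smooth_step_bounds[of "(-2/e) * x + (2 * b / e - 1)"]
  by (auto intro: mult_le_one)

lemma plateau_eq_0: "0 < e \<Longrightarrow> x \<notin> {a..b} \<Longrightarrow> plateau a b e x = 0"
proof -
  assume e: "0 < e" and x: "x \<notin> {a..b}"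
  then consider "x < a" | "x > b" by auto
  then show ?thesis
  proof cases
    case 1 then have "(2/e) * x + (- 2 * a / e - 1) \<le> -1" using e by (simp add: field_simps)
    then show ?thesis by (simp add: plateau_def smooth_step_eq_0)
  next
    case 2 then have "(-2/e) * x + (2 * b / e - 1) \<le> -1" using e by (simp add: field_simps)
    then show ?thesis by (simp add: plateau_def smooth_step_eq_0)
  qed
qed

lemma plateau_eq_1: "0 < e \<Longrightarrow> x \<in> {a+e..b-e} \<Longrightarrow> plateau a b e x = 1"
proof -
  assume e: "0 < e" and x: "x \<in> {a+e..b-e}"
  have "(2/e) * x + (- 2 * a / e - 1) = 2 * ((x - a) / e) - 1"
    by (simp add: diff_divide_distrib algebra_simps)
  moreover have "(x - a) / e \<ge> 1" using e x by (simp add: le_divide_eq)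
  ultimately have left: "(2/e) * x + (- 2 * a / e - 1) \<ge> 1" by linarith
  have "(-2/e) * x + (2 * b / e - 1) = 2 * ((b - x) / e) - 1"
    by (simp add: diff_divide_distrib algebra_simps)
  moreover have "(b - x) / e \<ge> 1" using e x by (simp add: le_divide_eq)
  ultimately have right: "(-2/e) * x + (2 * b / e - 1) \<ge> 1" by linarith
  show ?thesis using left right by (simp add: plateau_def smooth_step_eq_1)
qed

lemma indicator_minus_plateau_le:
  assumes e: "0 < e"
  shows "indicator {a..b} x - plateau a b e x \<le> indicator {a..a+e} x + (indicator {b-e..b} x :: real)"
proof (cases "x \<in> {a..b}")
  case False then show ?thesis using plateau_eq_0[OF e False] by (simp add: indicator_def)
next
  case True
  show ?thesis
  proof (cases "x \<in> {a+e..b-e}")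
    case True then show ?thesis using plateau_eq_1[OF e] by (simp add: indicator_def)
  next
    case False
    then have "x \<in> {a..a+e} \<or> x \<in> {b-e..b}" using \<open>x \<in> {a..b}\<close> by auto
    then show ?thesis using plateau_bounds[of a b e x] by (auto simp: indicator_def)
  qed
qed

definition time_cutoff :: "real \<Rightarrow> real \<Rightarrow> real \<Rightarrow> real \<Rightarrow> real" where
  "time_cutoff \<tau>1 \<tau>2 h s = smooth_step ((s - \<tau>1) / h) - smooth_step ((s - \<tau>2) / h)"

lemma smooth_time_cutoff: "smooth (time_cutoff \<tau>1 \<tau>2 h)"
proof -
  have "time_cutoff \<tau>1 \<tau>2 h = (\<lambda>s. 1 * smooth_step ((1/h) * s + (- \<tau>1 / h))
      + (-1) * smooth_step ((1/h) * s + (- \<tau>2 / h)))"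
    by (auto simp: time_cutoff_def fun_eq_iff diff_divide_distrib)
  then show ?thesis by (simp only:) (intro smooth_add smooth_affine smooth_smooth_step)
qed

lemma deriv_time_cutoff:
  "0 < h \<Longrightarrow> deriv (time_cutoff \<tau>1 \<tau>2 h) s = mollifier \<tau>1 h s - mollifier \<tau>2 h s"
  unfolding time_cutoff_def[abs_def]
  by (intro DERIV_imp_deriv DERIV_diff smooth_step_scaled_has_deriv)

lemma time_cutoff_bounds:
  assumes "0 < h" "\<tau>1 \<le> \<tau>2"
  shows "0 \<le> time_cutoff \<tau>1 \<tau>2 h s" "time_cutoff \<tau>1 \<tau>2 h s \<le> 1"
proof -
  have "(s - \<tau>2) / h \<le> (s - \<tau>1) / h" using assms by (intro divide_right_mono) auto
  then show "0 \<le> time_cutoff \<tau>1 \<tau>2 h s" unfolding time_cutoff_def using smooth_step_mono by auto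
  show "time_cutoff \<tau>1 \<tau>2 h s \<le> 1" unfolding time_cutoff_def
    using smooth_step_bounds[of "(s - \<tau>1) / h"] smooth_step_bounds[of "(s - \<tau>2) / h"] by auto
qed

lemma time_cutoff_eq_0:
  assumes "0 < h" "\<tau>1 \<le> \<tau>2" "s \<notin> {\<tau>1 - h..\<tau>2 + h}"
  shows "time_cutoff \<tau>1 \<tau>2 h s = 0"
proof (cases "s < \<tau>1 - h")
  case True
  then have "(s - \<tau>1) / h \<le> -1" "(s - \<tau>2) / h \<le> -1" using assms by (auto simp: field_simps)
  then show ?thesis by (simp add: time_cutoff_def smooth_step_eq_0)
next
  case False
  then have "(s - \<tau>1) / h \<ge> 1" "(s - \<tau>2) / h \<ge> 1" using assms by (auto simp: field_simps)
  then show ?thesis by (simp add: time_cutoff_def smooth_step_eq_1)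
qed

section \<open>Test functions, mollifiers and integration lemmas\<close>

lemma test_fun_product:
  assumes "smooth \<kappa>" "smooth \<psi>" "0 < a"
    "\<And>s. s \<notin> {a..b} \<Longrightarrow> \<kappa> s = 0" "\<And>x. x \<notin> {c..d} \<Longrightarrow> \<psi> x = 0"
  shows "test_fun (\<lambda>s x. \<kappa> s * \<psi> x)"
  unfolding test_fun_def
proof (intro conjI)
  let ?D = "\<lambda>i j s x. (deriv ^^ i) \<kappa> s * (deriv ^^ j) \<psi> x"
  show "\<exists>D. D 0 0 = (\<lambda>s x. \<kappa> s * \<psi> x) \<and>
      (\<forall>i j t x. ((\<lambda>s. D i j s x) has_real_derivative D (Suc i) j t x) (at t) \<and>
                 ((\<lambda>y. D i j t y) has_real_derivative D i (Suc j) t x) (at x)) \<and>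
      (\<forall>i j. continuous_on UNIV (\<lambda>z. D i j (fst z) (snd z)))"
  proof (intro exI[of _ ?D] conjI allI)
    show "?D 0 0 = (\<lambda>s x. \<kappa> s * \<psi> x)" by simp
    fix i j t x
    show "((\<lambda>s. ?D i j s x) has_real_derivative ?D (Suc i) j t x) (at t)"
      using DERIV_cmult_right[OF smooth_higher_deriv(2)[OF assms(1)]] by simp
    show "((\<lambda>y. ?D i j t y) has_real_derivative ?D i (Suc j) t x) (at x)"
      using DERIV_cmult[OF smooth_higher_deriv(2)[OF assms(2)]] by simp
  next
    fix i j
    have c: "continuous_on UNIV ((deriv ^^ i) \<kappa>)" "continuous_on UNIV ((deriv ^^ j) \<psi>)"
      by (intro smooth_imp_continuous_on smooth_higher_deriv assms)+
    show "continuous_on UNIV (\<lambda>z. ?D i j (fst z) (snd z))"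
      by (intro continuous_intros continuous_on_compose2[OF c(1)] continuous_on_compose2[OF c(2)]) auto
  qed
  show "\<exists>K. compact K \<and> K \<subseteq> Pi_dom \<and> (\<forall>t x. (t, x) \<notin> K \<longrightarrow> \<kappa> t * \<psi> x = 0)"
    using assms by (intro exI[of _ "{a..b} \<times> {c..d}"]) (auto simp: compact_Times Pi_dom_def)
qed

lemma pt_product: "smooth \<kappa> \<Longrightarrow> pt (\<lambda>s x. \<kappa> s * \<psi> x) s x = deriv \<kappa> s * \<psi> x"
  unfolding pt_def by (intro DERIV_imp_deriv DERIV_cmult_right smooth_deriv)

lemma px_product: "smooth \<psi> \<Longrightarrow> px (\<lambda>s x. \<kappa> s * \<psi> x) = (\<lambda>s x. \<kappa> s * deriv \<psi> x)"
  unfolding px_def by (intro ext DERIV_imp_deriv DERIV_cmult smooth_deriv)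

lemma continuous_bounded_on_interval:
  fixes F :: "real \<Rightarrow> real"
  assumes "continuous_on UNIV F"
  obtains B where "\<And>v. \<bar>v\<bar> \<le> M \<Longrightarrow> \<bar>F v\<bar> \<le> B"
proof -
  have "compact (F ` {-M..M})"
    by (intro compact_continuous_image continuous_on_subset[OF assms]) auto
  then obtain B where "\<And>y. y \<in> F ` {-M..M} \<Longrightarrow> norm y \<le> B"
    by (meson bounded_iff compact_imp_bounded)
  moreover have "\<bar>v\<bar> \<le> M \<Longrightarrow> F v \<in> F ` {-M..M}" for v by (auto simp: abs_le_iff)
  ultimately show ?thesis using that by force
qed

lemma integrable_bounded_by_box:
  fixes f :: "'a::euclidean_space \<Rightarrow> real"
  assumes "f \<in> borel_measurable lborel" "\<And>z. \<bar>f z\<bar> \<le> K * indicator (cbox l h) z"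
  shows "integrable lborel f"
proof -
  have "integrable lborel (\<lambda>z. K * indicator (cbox l h) z)"
    by (intro integrable_mult_right integrable_real_indicator emeasure_lborel_cbox_finite) auto
  moreover have "AE z in lborel. norm (f z) \<le> norm (K * indicator (cbox l h) z)"
    using assms(2) by (auto intro!: AE_I2 order_trans[OF _ abs_ge_self])
  ultimately show ?thesis by (rule Bochner_Integration.integrable_bound[OF _ assms(1)])
qed

lemma integrable_bounded_by_interval:
  fixes f :: "real \<Rightarrow> real"
  assumes "f \<in> borel_measurable borel" "\<And>s. \<bar>f s\<bar> \<le> K * indicator {l..r} s"
  shows "integrable lborel f"
  using integrable_bounded_by_box[of f K l r] assms by (simp add: measurable_lborel1)

lemma abs_integral_bounded_by_interval:
  fixes f :: "real \<Rightarrow> real"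
  assumes "f \<in> borel_measurable borel" "\<And>s. \<bar>f s\<bar> \<le> K * indicator {l..r} s" "l \<le> r"
  shows "\<bar>\<integral>s. f s \<partial>lborel\<bar> \<le> K * (r - l)"
proof -
  have "integrable lborel (\<lambda>s. K * indicator {l..r} s)"
    using emeasure_lborel_cbox_finite[of l r]
    by (intro integrable_mult_right integrable_real_indicator) (auto simp: cbox_interval)
  then have "\<bar>\<integral>s. f s \<partial>lborel\<bar> \<le> (\<integral>s. K * indicator {l..r} s \<partial>lborel)"
    by (rule integral_abs_bound_integral[OF integrable_bounded_by_interval[OF assms(1,2)] _ assms(2)])
  also have "\<dots> = K * (r - l)" using assms(3) by simp
  finally show ?thesis .
qed

lemma integrable_mollifier_times:
  fixes f :: "real \<Rightarrow> real"
  assumes h: "0 < h" and [measurable]: "f \<in> borel_measurable borel" and bound: "\<And>s. \<bar>f s\<bar> \<le> B"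
  shows "integrable lborel (\<lambda>s. mollifier \<tau> h s * f s)"
proof (rule integrable_bounded_by_interval)
  fix s
  have "\<bar>mollifier \<tau> h s * f s\<bar> \<le> (1 / (bump_mass * h)) * indicator {\<tau> - h..\<tau> + h} s * B"
    unfolding abs_mult using mollifier_le[OF h] mollifier_nonneg[OF h] bound bound[of 0] bump_mass_pos h
    by (intro mult_mono) (auto intro: order_trans[OF abs_ge_zero])
  then show "\<bar>mollifier \<tau> h s * f s\<bar> \<le> (B / (bump_mass * h)) * indicator {\<tau> - h..\<tau> + h} s"
    by (simp add: ac_simps)
qed measurable

lemma integral_indicator_abs_diff_ae:
  fixes f F :: "real \<Rightarrow> real"
  assumes [measurable]: "f \<in> borel_measurable borel" and F: "set_integrable lebesgue {l..r} F"
    and ae: "AE s in lborel. s \<in> {l..r} \<longrightarrow> f s = F s"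
  shows "(\<integral>s. indicator {l..r} s * \<bar>f s - c\<bar> \<partial>lborel) = (LINT s:{l..r}|lebesgue. \<bar>F s - c\<bar>)"
proof -
  have "(\<integral>s. indicator {l..r} s * \<bar>f s - c\<bar> \<partial>lborel) = (\<integral>s. indicator {l..r} s * \<bar>f s - c\<bar> \<partial>lebesgue)"
    by (subst integral_completion[symmetric]) auto
  also have "\<dots> = (LINT s:{l..r}|lebesgue. \<bar>F s - c\<bar>)"
    unfolding set_lebesgue_integral_def
  proof (rule integral_cong_AE)
    show "(\<lambda>s. indicator {l..r} s * \<bar>f s - c\<bar>) \<in> borel_measurable lebesgue"
      by (intro measurable_completion) (simp add: measurable_lborel1)
    have "(\<lambda>s. \<bar>indicator {l..r} s *\<^sub>R F s - indicator {l..r} s * c\<bar>) \<in> borel_measurable lebesgue"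
      using F unfolding set_integrable_def
      by (intro borel_measurable_abs borel_measurable_diff borel_measurable_times
          borel_measurable_const borel_measurable_indicator borel_measurable_integrable) auto
    moreover have "(\<lambda>s. \<bar>indicator {l..r} s *\<^sub>R F s - indicator {l..r} s * c\<bar>)
        = (\<lambda>s. indicator {l..r} s *\<^sub>R \<bar>F s - c\<bar>)"
      by (auto simp: indicator_def fun_eq_iff)
    ultimately show "(\<lambda>s. indicator {l..r} s *\<^sub>R \<bar>F s - c\<bar>) \<in> borel_measurable lebesgue" by simp
    show "AE s in lebesgue. indicator {l..r} s * \<bar>f s - c\<bar> = indicator {l..r} s *\<^sub>R \<bar>F s - c\<bar>"
      using AE_completion[OF ae] by (rule eventually_mono) (auto simp: indicator_def)
  qed
  finally show ?thesis .
qed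

lemma mollified_dist_le:
  fixes f F :: "real \<Rightarrow> real"
  assumes h: "0 < h" and [measurable]: "f \<in> borel_measurable borel" and bound: "\<And>s. \<bar>f s\<bar> \<le> B"
    and F: "set_integrable lebesgue {\<tau> - h..\<tau> + h} F"
    and ae: "AE s in lborel. s \<in> {\<tau> - h..\<tau> + h} \<longrightarrow> f s = F s"
  shows "\<bar>(\<integral>s. mollifier \<tau> h s * f s \<partial>lborel) - c\<bar>
    \<le> (2 / bump_mass) * ((1 / (2 * h)) * (LINT s:{\<tau> - h..\<tau> + h}|lebesgue. \<bar>F s - c\<bar>))"
proof -
  define I where "I = {\<tau> - h..\<tau> + h}"
  define G where "G s = (1 / (bump_mass * h)) * (indicator I s * \<bar>f s - c\<bar>)" for s
  have i1: "integrable lborel (\<lambda>s. mollifier \<tau> h s * f s)"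
    by (rule integrable_mollifier_times[OF h _ bound]) measurable
  have i2: "integrable lborel (mollifier \<tau> h)"
    by (rule integrable_bounded_by_interval[where K="1 / (bump_mass * h)" and l="\<tau>-h" and r="\<tau>+h"])
      (use mollifier_le[OF h] mollifier_nonneg[OF h] in auto)
  have i3: "integrable lborel G"
  proof (rule integrable_bounded_by_interval)
    fix s show "\<bar>G s\<bar> \<le> ((1 / (bump_mass * h)) * (B + \<bar>c\<bar>)) * indicator {\<tau> - h..\<tau> + h} s"
      using bound[of s] bump_mass_pos h by (auto simp: G_def I_def indicator_def intro!: divide_right_mono)
  qed (unfold G_def[abs_def] I_def, measurable)
  have "(\<integral>s. mollifier \<tau> h s * f s \<partial>lborel) - c
      = (\<integral>s. mollifier \<tau> h s * f s \<partial>lborel) - (\<integral>s. mollifier \<tau> h s * c \<partial>lborel)"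
    using integral_mollifier[OF h, of \<tau>] by simp
  also have "\<dots> = (\<integral>s. mollifier \<tau> h s * f s - mollifier \<tau> h s * c \<partial>lborel)"
    using i1 i2 by (intro Bochner_Integration.integral_diff[symmetric]) auto
  finally have "\<bar>(\<integral>s. mollifier \<tau> h s * f s \<partial>lborel) - c\<bar> \<le> integral\<^sup>L lborel G"
  proof (simp only:, intro integral_abs_bound_integral i3)
    show "integrable lborel (\<lambda>s. mollifier \<tau> h s * f s - mollifier \<tau> h s * c)" using i1 i2 by auto
    fix s
    have "\<bar>mollifier \<tau> h s * f s - mollifier \<tau> h s * c\<bar> = mollifier \<tau> h s * \<bar>f s - c\<bar>"
      using mollifier_nonneg[OF h] by (simp add: abs_mult right_diff_distrib[symmetric])
    also have "\<dots> \<le> (1 / (bump_mass * h) * indicator I s) * \<bar>f s - c\<bar>"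
      using mollifier_le[OF h, of \<tau> s] unfolding I_def by (intro mult_right_mono) auto
    also have "\<dots> = G s" by (simp add: G_def)
    finally show "\<bar>mollifier \<tau> h s * f s - mollifier \<tau> h s * c\<bar> \<le> G s" .
  qed
  also have "integral\<^sup>L lborel G = (1 / (bump_mass * h)) * (LINT s:I|lebesgue. \<bar>F s - c\<bar>)"
    unfolding G_def I_def by (simp add: integral_indicator_abs_diff_ae[OF _ F ae])
  also have "\<dots> = (2 / bump_mass) * ((1 / (2 * h)) * (LINT s:{\<tau> - h..\<tau> + h}|lebesgue. \<bar>F s - c\<bar>))"
    using h bump_mass_pos by (simp add: I_def field_simps)
  finally show ?thesis .
qed

lemma mollified_tendsto_lebesgue_point:
  fixes f F :: "real \<Rightarrow> real"
  assumes lp: "lebesgue_point F \<tau>" and tau: "0 < \<tau>"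
    and [measurable]: "f \<in> borel_measurable borel" and bound: "\<And>s. \<bar>f s\<bar> \<le> B"
    and ae: "AE s in lborel. s > 0 \<longrightarrow> f s = F s"
  shows "((\<lambda>h. \<integral>s. mollifier \<tau> h s * f s \<partial>lborel) \<longlongrightarrow> F \<tau>) (at_right 0)"
proof -
  let ?avg = "\<lambda>h. (1 / (2 * h)) * (LINT s:{\<tau> - h..\<tau> + h}|lebesgue. \<bar>F s - F \<tau>\<bar>)"
  have "\<forall>\<^sub>F h in at_right 0. 0 < h \<and> h < \<tau>"
    by (rule eventually_mono[OF eventually_at_right_real[of 0 \<tau>]]) (use tau in auto)
  moreover have "\<forall>\<^sub>F h in at_right 0. set_integrable lebesgue {\<tau> - h..\<tau> + h} F"
    using lp unfolding lebesgue_point_def by blast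
  ultimately have "\<forall>\<^sub>F h in at_right 0.
      norm ((\<integral>s. mollifier \<tau> h s * f s \<partial>lborel) - F \<tau>) \<le> (2 / bump_mass) * ?avg h"
  proof eventually_elim
    case (elim h)
    have "AE s in lborel. s \<in> {\<tau> - h..\<tau> + h} \<longrightarrow> f s = F s"
      using ae by (rule eventually_mono) (use elim in auto)
    with elim show ?case using mollified_dist_le[OF _ _ bound] by simp
  qed
  moreover have "((\<lambda>h. (2 / bump_mass) * ?avg h) \<longlongrightarrow> 0) (at_right 0)"
    using lp unfolding lebesgue_point_def by (intro tendsto_mult_right_zero) blast
  ultimately have "((\<lambda>h. (\<integral>s. mollifier \<tau> h s * f s \<partial>lborel) - F \<tau>) \<longlongrightarrow> 0) (at_right 0)"
    by (rule Lim_null_comparison)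
  then show ?thesis by (simp add: LIM_zero_iff)
qed

lemma set_integral_const_Icc: "l \<le> r \<Longrightarrow> (LINT x:{l..r}|lebesgue. c) = c * (r - l :: real)"
  by (subst set_integral_const) (auto simp: emeasure_completion measure_completion)

lemma set_integrable_bounded_Icc:
  fixes f :: "real \<Rightarrow> real"
  assumes "(\<lambda>x. indicator {l..r} x *\<^sub>R f x) \<in> borel_measurable lebesgue"
    and "\<And>x. x \<in> {l..r} \<Longrightarrow> \<bar>f x\<bar> \<le> B"
  shows "set_integrable lebesgue {l..r} f"
  unfolding set_integrable_def
proof (rule Bochner_Integration.integrable_bound[OF _ assms(1)])
  have "integrable lborel (indicator {l..r} :: real \<Rightarrow> real)"
    using emeasure_lborel_cbox_finite[of l r] by (intro integrable_real_indicator) (auto simp: cbox_interval)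
  then show "integrable lebesgue (\<lambda>x. B * indicator {l..r} x :: real)"
    by (intro integrable_mult_right) (subst integrable_completion, auto)
  show "AE x in lebesgue. norm (indicator {l..r} x *\<^sub>R f x) \<le> norm (B * indicator {l..r} x)"
    using assms(2) by (intro AE_I2) (auto simp: indicator_def intro: order_trans[OF _ abs_ge_self])
qed

lemma set_integrable_const_Icc: "set_integrable lebesgue {l..r :: real} (\<lambda>_. c :: real)"
  by (rule set_integrable_bounded_Icc[where B="\<bar>c\<bar>"], intro borel_measurable_scaleR
      borel_measurable_indicator borel_measurable_const) auto

lemma set_integrable_indicator_Icc:
  "T \<in> sets lebesgue \<Longrightarrow> set_integrable lebesgue {l..r :: real} (\<lambda>x. indicator T x :: real)"
  by (rule set_integrable_bounded_Icc[where B=1], intro borel_measurable_scaleR borel_measurable_indicator)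
    (auto simp: indicator_def)

lemma set_integral_indicator_Icc_le:
  "l \<le> r \<Longrightarrow> (LINT x:{0..1}|lebesgue. (indicator {l..r} x :: real)) \<le> r - l"
proof -
  assume "l \<le> r"
  have "(LINT x:{0..1}|lebesgue. (indicator {l..r} x :: real)) \<le> (LINT x:{l..r}|lebesgue. (indicator {0..1} x :: real))"
    unfolding set_lebesgue_integral_def by (simp add: ac_simps)
  also have "\<dots> \<le> (LINT x:{l..r}|lebesgue. (1::real))"
    by (intro set_integral_mono set_integrable_indicator_Icc set_integrable_const_Icc)
      (auto simp: indicator_def)
  also have "\<dots> = r - l" using \<open>l \<le> r\<close> by (simp add: set_integral_const_Icc)
  finally show ?thesis .
qed

lemma lebesgue_point_ae_shift:
  assumes I: "lebesgue_point I t" and J: "lebesgue_point J t" and "0 < r"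
    and shift: "AE s in lebesgue. s \<in> {t - r..t + r} \<longrightarrow> J s = I s + c"
  shows "J t = I t + c"
proof -
  let ?avg = "\<lambda>F h. (1 / (2 * h)) * (LINT s:{t - h..t + h}|lebesgue. \<bar>F s - F t\<bar>)"
  have "\<forall>\<^sub>F h in at_right 0. \<bar>J t - I t - c\<bar> \<le> ?avg I h + ?avg J h"
  proof -
    have "\<forall>\<^sub>F h in at_right 0. 0 < h \<and> h < r"
      by (rule eventually_mono[OF eventually_at_right_real[of 0 r]]) (use \<open>0 < r\<close> in auto)
    moreover have "\<forall>\<^sub>F h in at_right 0. set_integrable lebesgue {t - h..t + h} I"
      "\<forall>\<^sub>F h in at_right 0. set_integrable lebesgue {t - h..t + h} J"
      using I J unfolding lebesgue_point_def by blast+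
    ultimately show ?thesis
    proof eventually_elim
      case (elim h)
      let ?S = "{t - h..t + h}"
      have iI: "set_integrable lebesgue ?S (\<lambda>s. \<bar>I s - I t\<bar>)" and iJ: "set_integrable lebesgue ?S (\<lambda>s. \<bar>J s - J t\<bar>)"
        using elim by (auto intro!: set_integrable_abs set_integral_diff(1) set_integrable_const_Icc)
      have "\<bar>J t - I t - c\<bar> * (2 * h) = (LINT s:?S|lebesgue. \<bar>J t - I t - c\<bar>)"
        using elim by (simp add: set_integral_const_Icc)
      also have "\<dots> \<le> (LINT s:?S|lebesgue. \<bar>I s - I t\<bar> + \<bar>J s - J t\<bar>)"
      proof (rule set_integral_mono_AE)
        show "set_integrable lebesgue ?S (\<lambda>s. \<bar>J t - I t - c\<bar>)"
          by (rule set_integrable_const_Icc)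
        show "set_integrable lebesgue ?S (\<lambda>s. \<bar>I s - I t\<bar> + \<bar>J s - J t\<bar>)"
          by (rule set_integral_add(1)[OF iI iJ])
        show "AE s\<in>?S in lebesgue. \<bar>J t - I t - c\<bar> \<le> \<bar>I s - I t\<bar> + \<bar>J s - J t\<bar>"
          using shift by (rule eventually_mono) (use elim in auto)
      qed
      also have "\<dots> = (LINT s:?S|lebesgue. \<bar>I s - I t\<bar>) + (LINT s:?S|lebesgue. \<bar>J s - J t\<bar>)"
        by (rule set_integral_add(2)[OF iI iJ])
      finally show ?case using elim by (simp add: field_simps)
    qed
  qed
  moreover have "((\<lambda>h. ?avg I h + ?avg J h) \<longlongrightarrow> 0 + 0) (at_right 0)"
    using I J unfolding lebesgue_point_def by (intro tendsto_add) auto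
  ultimately have "\<bar>J t - I t - c\<bar> \<le> 0 + 0"
    by (intro tendsto_le[OF trivial_limit_at_right_real _ tendsto_const]) auto
  then show ?thesis by simp
qed

lemma tendsto_uniform_approximation:
  fixes f :: "'a \<Rightarrow> real" and g :: "nat \<Rightarrow> 'a \<Rightarrow> real"
  assumes g: "\<And>N. (g N \<longlongrightarrow> g N x) F" and r: "r \<longlonglongrightarrow> 0"
    and approx: "\<And>N. \<forall>\<^sub>F t in F. \<bar>f t - g N t\<bar> \<le> r N" and approx_at: "\<And>N. \<bar>f x - g N x\<bar> \<le> r N"
  shows "(f \<longlongrightarrow> f x) F"
proof (rule tendstoI)
  fix \<epsilon> :: real assume "0 < \<epsilon>"
  then have "\<forall>\<^sub>F N in sequentially. r N < \<epsilon> / 3"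
    using r by (intro order_tendstoD(2)) auto
  then obtain N where N: "r N < \<epsilon> / 3" by (auto simp: eventually_sequentially)
  have "\<forall>\<^sub>F t in F. dist (g N t) (g N x) < \<epsilon> / 3"
    using g \<open>0 < \<epsilon>\<close> by (intro tendstoD) auto
  then show "\<forall>\<^sub>F t in F. dist (f t) (f x) < \<epsilon>"
    using approx[of N]
  proof eventually_elim
    case (elim t)
    then show ?case using approx_at[of N] N unfolding dist_real_def abs_le_iff abs_less_iff by linarith
  qed
qed

lemma set_integral_indicator_UN_tendsto:
  fixes f :: "nat \<Rightarrow> real set"
  assumes f: "\<And>i. f i \<in> sets lebesgue"
  shows "(\<lambda>N. LINT x:{0..1}|lebesgue. indicator (\<Union>i. f i) x - indicator (\<Union>i<N. f i) x :: real)
    \<longlonglongrightarrow> 0"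
proof -
  define T where "T = (\<Union>i. f i)"
  define G where "G N = (\<Union>i<N. f i)" for N
  have T: "T \<in> sets lebesgue" and G: "G N \<in> sets lebesgue" "G N \<subseteq> T" for N
    using f by (auto simp: T_def G_def)
  have "(\<lambda>N. LINT x:{0..1}|lebesgue. indicator T x - indicator (G N) x :: real)
      \<longlonglongrightarrow> integral\<^sup>L lebesgue (\<lambda>x::real. 0 :: real)"
    unfolding set_lebesgue_integral_def
  proof (rule integral_dominated_convergence[where w="indicator {0..1}"])
    show "integrable lebesgue (indicator {0..1} :: real \<Rightarrow> real)"
      using set_integrable_const_Icc[of 0 1 1] by (simp add: set_integrable_def)
    show "(\<lambda>x. indicator {0..1} x *\<^sub>R (indicator T x - indicator (G N) x) :: real) \<in> borel_measurable lebesgue" for N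
      using T G by (intro borel_measurable_scaleR borel_measurable_diff borel_measurable_indicator) auto
    show "AE x in lebesgue. norm (indicator {0..1} x *\<^sub>R (indicator T x - indicator (G N) x) :: real)
        \<le> indicator {0..1} x" for N
      using G(2)[of N] by (intro AE_I2) (auto simp: indicator_def)
    show "AE x in lebesgue. (\<lambda>N. indicator {0..1} x *\<^sub>R (indicator T x - indicator (G N) x) :: real) \<longlonglongrightarrow> 0"
    proof (intro AE_I2)
      fix x :: real
      have "\<forall>\<^sub>F N in sequentially. indicator T x - indicator (G N) x = (0::real)"
      proof (cases "x \<in> T")
        case True
        then obtain i where i: "x \<in> f i" by (auto simp: T_def)
        show ?thesis using eventually_ge_at_top[of "Suc i"]
        proof (rule eventually_mono)
          fix N assume "Suc i \<le> N"
          then have "x \<in> G N" using i by (auto simp: G_def)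
          then show "indicator T x - indicator (G N) x = (0::real)" using True by simp
        qed
      next
        case False
        then have "x \<notin> G N" for N using G(2) by auto
        then show ?thesis using False by simp
      qed
      then show "(\<lambda>N. indicator {0..1} x *\<^sub>R (indicator T x - indicator (G N) x) :: real) \<longlonglongrightarrow> 0"
        by (intro tendsto_eventually) (auto elim: eventually_mono)
    qed
  qed simp
  then show ?thesis by (simp add: T_def G_def)
qed

(* Integrated against v = u(t), the first term is upper semicontinuous in t and the second
   weakly continuous. *)
definition level_gap :: "real \<Rightarrow> real \<Rightarrow> real \<Rightarrow> real \<Rightarrow> real" where
  "level_gap k d w v = \<bar>v - k\<bar> + (indicator {..<k} w - indicator {k + d..} w) * (v - k)"

lemma level_gap_nonneg: "w \<notin> {k..<k + d} \<Longrightarrow> 0 \<le> level_gap k d w v"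
  by (auto simp: level_gap_def indicator_def)

lemma level_gap_self: "0 \<le> d \<Longrightarrow> w \<notin> {k..<k + d} \<Longrightarrow> level_gap k d w w = 0"
  by (auto simp: level_gap_def indicator_def)

lemma level_gap_cell: "w \<in> {k..<k + d} \<Longrightarrow> level_gap k d w v = \<bar>v - k\<bar>"
  by (auto simp: level_gap_def indicator_def)

definition grid_level :: "real \<Rightarrow> real \<Rightarrow> nat \<Rightarrow> real" where
  "grid_level M d j = - M + real j * d"

definition grid_size :: "real \<Rightarrow> real \<Rightarrow> nat" where
  "grid_size M d = nat \<lceil>2 * M / d\<rceil>"

lemma grid_cell_exists:
  assumes "0 < d" "\<bar>w\<bar> \<le> M"
  obtains j where "j \<le> grid_size M d" "w \<in> {grid_level M d j..<grid_level M d j + d}"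
proof
  define j where "j = nat \<lfloor>(w + M) / d\<rfloor>"
  have "0 \<le> (w + M) / d" using assms by (simp add: abs_le_iff)
  then have j: "real j = of_int \<lfloor>(w + M) / d\<rfloor>" by (simp add: j_def)
  then have "real j \<le> (w + M) / d" "(w + M) / d < real j + 1" by linarith+
  then show "w \<in> {grid_level M d j..<grid_level M d j + d}"
    using assms(1) by (simp add: grid_level_def field_simps)
  have "(w + M) / d \<le> 2 * M / d" using assms by (intro divide_right_mono) (auto simp: abs_le_iff)
  then show "j \<le> grid_size M d"
    unfolding grid_size_def j_def by (intro nat_mono) (meson floor_le_ceiling floor_mono order_trans)
qed

lemma grid_cell_unique:
  assumes "0 < d" "w \<in> {grid_level M d i..<grid_level M d i + d}" "w \<in> {grid_level M d j..<grid_level M d j + d}"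
  shows "i = j"
proof -
  have "d * real i < d * (real j + 1)" "d * real j < d * (real i + 1)"
    using assms by (auto simp: grid_level_def algebra_simps)
  then have "real i < real j + 1" "real j < real i + 1"
    using assms(1) by simp_all
  then show ?thesis by linarith
qed

lemma abs_diff_le_level_gaps:
  assumes d: "0 < d" and w: "\<bar>w\<bar> \<le> M"
  shows "\<bar>v - w\<bar> \<le> d + (\<Sum>j\<le>grid_size M d. level_gap (grid_level M d j) d w v)"
proof -
  obtain i where i: "i \<le> grid_size M d" "w \<in> {grid_level M d i..<grid_level M d i + d}"
    using grid_cell_exists[OF d w] .
  have "\<bar>v - w\<bar> \<le> d + level_gap (grid_level M d i) d w v"
    using i(2) by (simp add: level_gap_cell, arith)
  also have "level_gap (grid_level M d i) d w v \<le> (\<Sum>j\<le>grid_size M d. level_gap (grid_level M d j) d w v)"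
    using i grid_cell_unique[OF d] by (intro member_le_sum level_gap_nonneg) auto
  finally show ?thesis by simp
qed

lemma level_gaps_self_le:
  assumes d: "0 < d" and w: "\<bar>w\<bar> \<le> M"
  shows "(\<Sum>j\<le>grid_size M d. level_gap (grid_level M d j) d w w) \<le> d"
proof -
  obtain i where i: "i \<le> grid_size M d" "w \<in> {grid_level M d i..<grid_level M d i + d}"
    using grid_cell_exists[OF d w] .
  have "(\<Sum>j\<in>{i}. level_gap (grid_level M d j) d w w) = (\<Sum>j\<le>grid_size M d. level_gap (grid_level M d j) d w w)"
    using i grid_cell_unique[OF d] d by (intro sum.mono_neutral_left) (auto intro: level_gap_self)
  then have "(\<Sum>j\<le>grid_size M d. level_gap (grid_level M d j) d w w) = level_gap (grid_level M d i) d w w"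
    by simp
  also have "\<dots> \<le> d" using i(2) by (simp add: level_gap_cell)
  finally show ?thesis .
qed

section \<open>Entropy inequality for product test functions\<close>

locale bounded_entropy_solution =
  fixes \<phi> g u0 :: "real \<Rightarrow> real" and u :: "real \<Rightarrow> real \<Rightarrow> real" and M :: real
  assumes continuous_flux: "continuous_on UNIV \<phi>" and continuous_diffusion: "continuous_on UNIV g"
    and entropy: "entropy_solution \<phi> g u0 u" and bounded: "\<forall>t x. t > 0 \<longrightarrow> \<bar>u t x\<bar> \<le> M"
begin

lemma abs_u_le: "t > 0 \<Longrightarrow> \<bar>u t x\<bar> \<le> M"
  using bounded by auto

lemma M_nonneg: "0 \<le> M"
  using abs_u_le[of 1 0] by linarith

lemma borel_representative_exists:
  "\<exists>w. w \<in> borel_measurable lborel \<and> (\<forall>z. \<bar>w z\<bar> \<le> M) \<and>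
     (AE z in lborel. z \<in> Pi_dom \<longrightarrow> w z = u (fst z) (snd z))"
proof -
  have "(\<lambda>z. indicator Pi_dom z *\<^sub>R u (fst z) (snd z)) \<in> borel_measurable lebesgue"
    using entropy unfolding entropy_solution_def Linf_Pi_def set_borel_measurable_def by auto
  from completion_ex_borel_measurable_real[OF this] obtain h where
    h: "h \<in> borel_measurable lborel" "AE z in lborel. indicator Pi_dom z *\<^sub>R u (fst z) (snd z) = h z"
    by auto
  define w where "w z = max (-M) (min M (h z))" for z
  have "w \<in> borel_measurable lborel" unfolding w_def using h(1) by measurable
  moreover have "\<forall>z. \<bar>w z\<bar> \<le> M" using M_nonneg by (auto simp: w_def)
  moreover have "AE z in lborel. z \<in> Pi_dom \<longrightarrow> w z = u (fst z) (snd z)"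
    using h(2)
  proof (rule eventually_mono)
    fix z assume "indicator Pi_dom z *\<^sub>R u (fst z) (snd z) = h z"
    then show "z \<in> Pi_dom \<longrightarrow> w z = u (fst z) (snd z)"
      using abs_u_le[of "fst z" "snd z"] by (auto simp: w_def Pi_dom_def)
  qed
  ultimately show ?thesis by blast
qed

(* The entropy inequality is about the merely Lebesgue measurable u; Fubini needs a bounded
   Borel function agreeing with u almost everywhere on Pi. *)
definition u_borel :: "real \<times> real \<Rightarrow> real" where
  "u_borel = (SOME w. w \<in> borel_measurable lborel \<and> (\<forall>z. \<bar>w z\<bar> \<le> M) \<and>
     (AE z in lborel. z \<in> Pi_dom \<longrightarrow> w z = u (fst z) (snd z)))"

lemma u_borel: "u_borel \<in> borel_measurable lborel" "\<And>z. \<bar>u_borel z\<bar> \<le> M"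
   "AE z in lborel. z \<in> Pi_dom \<longrightarrow> u_borel z = u (fst z) (snd z)"
  using someI_ex[OF borel_representative_exists] unfolding u_borel_def[symmetric] by auto

lemma borel_measurable_u_borel[measurable]: "u_borel \<in> borel_measurable borel"
  using u_borel(1) by (simp add: measurable_lborel1)

lemma borel_measurable_u_borel_pair: "u_borel \<in> borel_measurable (lborel \<Otimes>\<^sub>M lborel)"
  using u_borel(1) by (simp add: lborel_prod)

lemma borel_measurable_u_borel_section[measurable]: "(\<lambda>x. u_borel (s, x)) \<in> borel_measurable borel"
  using measurable_Pair2[OF borel_measurable_u_borel_pair, of s] by (simp add: measurable_lborel1)

lemma u_borel_sections_ae_eq: "AE s in lborel. s > 0 \<longrightarrow> (AE x in lborel. u_borel (s, x) = u s x)"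
proof -
  have "AE z in lborel \<Otimes>\<^sub>M lborel. z \<in> Pi_dom \<longrightarrow> u_borel z = u (fst z) (snd z)"
    using u_borel(3) unfolding lborel_prod .
  from lborel_pair.AE_pair[OF this] show ?thesis
    by (rule eventually_mono) (auto simp: Pi_dom_def)
qed

definition flux_term :: "real \<Rightarrow> (real \<Rightarrow> real) \<Rightarrow> real \<Rightarrow> real \<Rightarrow> real" where
  "flux_term k \<psi> v x = sgn (v - k) * (\<phi> v - \<phi> k) * deriv \<psi> x + \<bar>g v - g k\<bar> * deriv (deriv \<psi>) x"

lemma flux_term_bounded:
  assumes "smooth \<psi>" "\<And>x. x \<notin> {c..d} \<Longrightarrow> \<psi> x = 0"
  obtains C where "0 \<le> C" "\<And>v x. \<bar>v\<bar> \<le> M \<Longrightarrow> \<bar>flux_term k \<psi> v x\<bar> \<le> C * indicator {c..d} x"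
proof -
  obtain B\<phi> where B\<phi>: "\<And>v. \<bar>v\<bar> \<le> M \<Longrightarrow> \<bar>\<phi> v\<bar> \<le> B\<phi>"
    using continuous_bounded_on_interval[OF continuous_flux] by blast
  obtain Bg where Bg: "\<And>v. \<bar>v\<bar> \<le> M \<Longrightarrow> \<bar>g v\<bar> \<le> Bg"
    using continuous_bounded_on_interval[OF continuous_diffusion] by blast
  have d1: "smooth (deriv \<psi>)" and d2: "smooth (deriv (deriv \<psi>))"
    using assms(1) by (simp_all add: smooth_deriv)
  have z1: "x \<notin> {c..d} \<Longrightarrow> deriv \<psi> x = 0" for x
    using smooth_deriv_eq_0_outside[OF assms] by blast
  have z2: "x \<notin> {c..d} \<Longrightarrow> deriv (deriv \<psi>) x = 0" for x
    using smooth_deriv_eq_0_outside[OF d1 z1] by blast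
  obtain B1 where B1: "\<And>x. \<bar>deriv \<psi> x\<bar> \<le> B1"
    using smooth_vanishing_outside_bounded[OF d1 z1] by blast
  obtain B2 where B2: "\<And>x. \<bar>deriv (deriv \<psi>) x\<bar> \<le> B2"
    using smooth_vanishing_outside_bounded[OF d2 z2] by blast
  define C where "C = (B\<phi> + \<bar>\<phi> k\<bar>) * B1 + (Bg + \<bar>g k\<bar>) * B2"
  have "\<bar>flux_term k \<psi> v x\<bar> \<le> max C 0 * indicator {c..d} x" if v: "\<bar>v\<bar> \<le> M" for v x
  proof (cases "x \<in> {c..d}")
    case False then show ?thesis using z1 z2 by (simp add: flux_term_def)
  next
    case True
    have "\<bar>sgn (v - k) * (\<phi> v - \<phi> k) * deriv \<psi> x\<bar> \<le> 1 * \<bar>\<phi> v - \<phi> k\<bar> * \<bar>deriv \<psi> x\<bar>"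
      unfolding abs_mult by (intro mult_right_mono) (auto simp: sgn_real_def)
    also have "\<dots> \<le> (B\<phi> + \<bar>\<phi> k\<bar>) * B1"
      using B\<phi>[OF v] B1[of x] by (intro mult_mono) auto
    finally have "\<bar>sgn (v - k) * (\<phi> v - \<phi> k) * deriv \<psi> x\<bar> \<le> (B\<phi> + \<bar>\<phi> k\<bar>) * B1" .
    moreover have "\<bar>\<bar>g v - g k\<bar> * deriv (deriv \<psi>) x\<bar> \<le> (Bg + \<bar>g k\<bar>) * B2"
      using Bg[OF v] B2[of x] by (auto simp: abs_mult intro!: mult_mono)
    ultimately show ?thesis using True by (auto simp: C_def flux_term_def)
  qed
  then show ?thesis by (intro that[of "max C 0"]) auto
qed

lemma borel_measurable_smooth_derivs:
  assumes "smooth \<psi>"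
  shows "\<psi> \<in> borel_measurable borel" "deriv \<psi> \<in> borel_measurable borel"
    "deriv (deriv \<psi>) \<in> borel_measurable borel"
  by (intro smooth_imp_borel_measurable smooth_deriv assms)+

lemma borel_measurable_flux_term:
  assumes "smooth \<psi>"
  shows "(\<lambda>z. flux_term k \<psi> (u_borel z) (snd z)) \<in> borel_measurable (borel \<Otimes>\<^sub>M borel)"
proof -
  have [measurable]: "deriv \<psi> \<in> borel_measurable borel" "deriv (deriv \<psi>) \<in> borel_measurable borel"
    by (fact borel_measurable_smooth_derivs[OF assms])+
  have [measurable]: "\<phi> \<in> borel_measurable borel" "g \<in> borel_measurable borel"
    by (intro borel_measurable_continuous_onI continuous_flux continuous_diffusion)+
  have [measurable]: "u_borel \<in> borel_measurable (borel \<Otimes>\<^sub>M borel)"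
    by (simp add: borel_prod)
  show ?thesis unfolding flux_term_def by measurable
qed

lemma integral_Pi_dom_eq_u_borel:
  fixes \<Phi> :: "real \<times> real \<Rightarrow> real \<Rightarrow> real"
  assumes m: "(\<lambda>z. \<Phi> z (u_borel z)) \<in> borel_measurable lborel" and vanish: "\<And>z v. z \<notin> Pi_dom \<Longrightarrow> \<Phi> z v = 0"
  shows "integral\<^sup>L lebesgue (\<lambda>z. indicator Pi_dom z *\<^sub>R \<Phi> z (u (fst z) (snd z)))
    = integral\<^sup>L lborel (\<lambda>z. \<Phi> z (u_borel z))"
proof -
  have m': "(\<lambda>z. \<Phi> z (u_borel z)) \<in> borel_measurable lebesgue"
    using m by (rule measurable_completion)
  have "AE z in lborel. indicator Pi_dom z *\<^sub>R \<Phi> z (u (fst z) (snd z)) = \<Phi> z (u_borel z)"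
    using u_borel(3) by (rule eventually_mono) (metis indicator_simps scaleR_one scaleR_zero_left vanish)
  then have ae: "AE z in lebesgue. indicator Pi_dom z *\<^sub>R \<Phi> z (u (fst z) (snd z)) = \<Phi> z (u_borel z)"
    by (rule AE_completion)
  have "integral\<^sup>L lebesgue (\<lambda>z. indicator Pi_dom z *\<^sub>R \<Phi> z (u (fst z) (snd z)))
      = integral\<^sup>L lebesgue (\<lambda>z. \<Phi> z (u_borel z))"
  proof (rule integral_cong_AE[OF _ m' ae])
    show "(\<lambda>z. indicator Pi_dom z *\<^sub>R \<Phi> z (u (fst z) (snd z))) \<in> borel_measurable lebesgue"
      by (rule borel_measurable_AE[OF m']) (use ae in \<open>auto elim: eventually_mono\<close>)
  qed
  also have "\<dots> = integral\<^sup>L lborel (\<lambda>z. \<Phi> z (u_borel z))"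
    using m by (rule integral_completion)
  finally show ?thesis .
qed

lemma entropy_inequality_product:
  assumes \<kappa>: "smooth \<kappa>" "\<And>s. 0 \<le> \<kappa> s" "0 < a" "\<And>s. s \<notin> {a..b} \<Longrightarrow> \<kappa> s = 0"
    and \<psi>: "smooth \<psi>" "\<And>x. 0 \<le> \<psi> x" "\<And>x. x \<notin> {c..d} \<Longrightarrow> \<psi> x = 0"
  shows "0 \<le> (\<integral>z. deriv \<kappa> (fst z) * (\<bar>u_borel z - k\<bar> * \<psi> (snd z))
                 + \<kappa> (fst z) * flux_term k \<psi> (u_borel z) (snd z) \<partial>lborel)"
proof -
  let ?f = "\<lambda>s x. \<kappa> s * \<psi> x"
  define \<Phi> where "\<Phi> z v = deriv \<kappa> (fst z) * (\<bar>v - k\<bar> * \<psi> (snd z))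
      + \<kappa> (fst z) * flux_term k \<psi> v (snd z)" for z :: "real \<times> real" and v
  have [measurable]: "deriv \<kappa> \<in> borel_measurable borel" "\<kappa> \<in> borel_measurable borel"
    "\<psi> \<in> borel_measurable borel" "u_borel \<in> borel_measurable (borel \<Otimes>\<^sub>M borel)"
    "(\<lambda>z. flux_term k \<psi> (u_borel z) (snd z)) \<in> borel_measurable (borel \<Otimes>\<^sub>M borel)"
    using borel_measurable_smooth_derivs[OF \<kappa>(1)] borel_measurable_smooth_derivs[OF \<psi>(1)]
      borel_measurable_flux_term[OF \<psi>(1)] by (simp_all add: borel_prod)
  have "(\<lambda>z. \<Phi> z (u_borel z)) \<in> borel_measurable (borel \<Otimes>\<^sub>M borel)"
    unfolding \<Phi>_def by measurable
  then have m: "(\<lambda>z. \<Phi> z (u_borel z)) \<in> borel_measurable lborel"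
    by (simp add: borel_prod measurable_lborel1)
  have vanish: "\<Phi> z v = 0" if "z \<notin> Pi_dom" for z v
  proof -
    have "fst z \<notin> {a..b}" using that \<kappa>(3) by (cases z) (auto simp: Pi_dom_def)
    then show ?thesis using \<kappa>(4) smooth_deriv_eq_0_outside[OF \<kappa>(1,4)] by (simp add: \<Phi>_def)
  qed
  have "\<forall>t x. 0 \<le> ?f t x" using \<kappa>(2) \<psi>(2) by simp
  then have "0 \<le> (LINT z:Pi_dom|lebesgue.
            (let t = fst z; x = snd z in
               \<bar>u t x - k\<bar> * pt ?f t x
               + sgn (u t x - k) * (\<phi> (u t x) - \<phi> k) * px ?f t x
               + \<bar>g (u t x) - g k\<bar> * px (px ?f) t x))"
    using entropy test_fun_product[OF \<kappa>(1) \<psi>(1) \<kappa>(3,4) \<psi>(3)]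
    unfolding entropy_solution_def by blast
  also have "\<dots> = integral\<^sup>L lebesgue (\<lambda>z. indicator Pi_dom z *\<^sub>R \<Phi> z (u (fst z) (snd z)))"
    unfolding set_lebesgue_integral_def
    by (simp add: Let_def \<Phi>_def flux_term_def pt_product[OF \<kappa>(1)] px_product[OF \<psi>(1)]
        px_product[OF smooth_deriv(2)[OF \<psi>(1)]] algebra_simps)
  also have "\<dots> = integral\<^sup>L lborel (\<lambda>z. \<Phi> z (u_borel z))"
    by (rule integral_Pi_dom_eq_u_borel[where \<Phi>=\<Phi>, OF m vanish])
  finally show ?thesis by (simp add: \<Phi>_def)
qed

definition weighted_distance :: "real \<Rightarrow> (real \<Rightarrow> real) \<Rightarrow> real \<Rightarrow> real" where
  "weighted_distance k \<psi> t = (LINT x:{0..1}|lebesgue. \<bar>u t x - k\<bar> * \<psi> x)"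

definition weighted_distance_borel :: "real \<Rightarrow> (real \<Rightarrow> real) \<Rightarrow> real \<Rightarrow> real" where
  "weighted_distance_borel k \<psi> s = (\<integral>x. \<bar>u_borel (s, x) - k\<bar> * \<psi> x \<partial>lborel)"

lemma borel_measurable_weighted_distance_borel:
  assumes [measurable]: "\<psi> \<in> borel_measurable borel"
  shows "weighted_distance_borel k \<psi> \<in> borel_measurable borel"
proof -
  have [measurable]: "u_borel \<in> borel_measurable (lborel \<Otimes>\<^sub>M lborel)" by (rule borel_measurable_u_borel_pair)
  have "(\<lambda>s. \<integral>x. \<bar>u_borel (s, x) - k\<bar> * \<psi> x \<partial>lborel) \<in> borel_measurable lborel"
    by (rule lborel.borel_measurable_lebesgue_integral) measurable
  then show ?thesis unfolding weighted_distance_borel_def[abs_def] by (simp add: measurable_lborel1)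
qed

lemma abs_weighted_distance_borel_le:
  assumes [measurable]: "\<psi> \<in> borel_measurable borel" and "\<And>x. \<bar>\<psi> x\<bar> \<le> B"
    and "\<And>x. x \<notin> {c..d} \<Longrightarrow> \<psi> x = 0" "c \<le> d"
  shows "\<bar>weighted_distance_borel k \<psi> s\<bar> \<le> ((M + \<bar>k\<bar>) * B) * (d - c)"
  unfolding weighted_distance_borel_def
proof (rule abs_integral_bounded_by_interval)
  fix x
  have "\<bar>u_borel (s, x) - k\<bar> \<le> M + \<bar>k\<bar>" using u_borel(2)[of "(s,x)"] by linarith
  then show "\<bar>\<bar>u_borel (s, x) - k\<bar> * \<psi> x\<bar> \<le> (M + \<bar>k\<bar>) * B * indicator {c..d} x"
    using assms(2)[of x] assms(3)[of x] unfolding abs_mult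
    by (cases "x \<in> {c..d}") (auto intro!: mult_mono)
qed (use assms in auto)

lemma weighted_distance_borel_ae_eq:
  assumes [measurable]: "\<psi> \<in> borel_measurable borel"
    and vanish: "\<And>x. x \<notin> {0..1} \<Longrightarrow> \<psi> x = 0"
  shows "AE s in lborel. s > 0 \<longrightarrow> weighted_distance_borel k \<psi> s = weighted_distance k \<psi> s"
  using u_borel_sections_ae_eq
proof (rule eventually_mono)
  fix s assume h: "0 < s \<longrightarrow> (AE x in lborel. u_borel (s, x) = u s x)"
  show "0 < s \<longrightarrow> weighted_distance_borel k \<psi> s = weighted_distance k \<psi> s"
  proof
    assume s: "0 < s"
    have m0: "(\<lambda>x. \<bar>u_borel (s, x) - k\<bar> * \<psi> x) \<in> borel_measurable lborel"
      by (simp add: measurable_lborel1)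
    then have m1: "(\<lambda>x. \<bar>u_borel (s, x) - k\<bar> * \<psi> x) \<in> borel_measurable lebesgue"
      by (rule measurable_completion)
    have ae: "AE x in lebesgue. \<bar>u_borel (s, x) - k\<bar> * \<psi> x = indicator {0..1} x *\<^sub>R (\<bar>u s x - k\<bar> * \<psi> x)"
      using AE_completion[OF h[rule_format, OF s]]
      by (rule eventually_mono) (use vanish in \<open>force simp: indicator_def\<close>)
    have "weighted_distance_borel k \<psi> s = (\<integral>x. \<bar>u_borel (s, x) - k\<bar> * \<psi> x \<partial>lebesgue)"
      unfolding weighted_distance_borel_def using m0 by (simp add: integral_completion)
    also have "\<dots> = (\<integral>x. indicator {0..1} x *\<^sub>R (\<bar>u s x - k\<bar> * \<psi> x) \<partial>lebesgue)"
      by (rule integral_cong_AE[OF m1 borel_measurable_AE[OF m1 ae] ae])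
    also have "\<dots> = weighted_distance k \<psi> s"
      by (simp add: weighted_distance_def set_lebesgue_integral_def)
    finally show "weighted_distance_borel k \<psi> s = weighted_distance k \<psi> s" .
  qed
qed

lemma integral_time_derivative_term:
  assumes \<kappa>: "smooth \<kappa>" "\<And>s. s \<notin> {a..b} \<Longrightarrow> \<kappa> s = 0"
    and \<psi>: "smooth \<psi>" "\<And>x. x \<notin> {c..d} \<Longrightarrow> \<psi> x = 0"
  shows "integrable lborel (\<lambda>z. deriv \<kappa> (fst z) * (\<bar>u_borel z - k\<bar> * \<psi> (snd z)))"
    and "(\<integral>z. deriv \<kappa> (fst z) * (\<bar>u_borel z - k\<bar> * \<psi> (snd z)) \<partial>lborel)
      = (\<integral>s. deriv \<kappa> s * weighted_distance_borel k \<psi> s \<partial>lborel)"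
proof -
  let ?\<Psi> = "\<lambda>z. deriv \<kappa> (fst z) * (\<bar>u_borel z - k\<bar> * \<psi> (snd z))"
  have d\<kappa>: "s \<notin> {a..b} \<Longrightarrow> deriv \<kappa> s = 0" for s
    using smooth_deriv_eq_0_outside[OF \<kappa>] by blast
  obtain B\<kappa> where B\<kappa>: "\<And>s. \<bar>deriv \<kappa> s\<bar> \<le> B\<kappa>"
    using smooth_vanishing_outside_bounded[OF smooth_deriv(2)[OF \<kappa>(1)] d\<kappa>] by blast
  obtain B\<psi> where B\<psi>: "\<And>x. \<bar>\<psi> x\<bar> \<le> B\<psi>"
    using smooth_vanishing_outside_bounded[OF \<psi>] by blast
  have [measurable]: "deriv \<kappa> \<in> borel_measurable borel" "\<psi> \<in> borel_measurable borel"
    "u_borel \<in> borel_measurable (borel \<Otimes>\<^sub>M borel)"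
    using borel_measurable_smooth_derivs[OF \<kappa>(1)] borel_measurable_smooth_derivs[OF \<psi>(1)] by (simp_all add: borel_prod)
  have "?\<Psi> \<in> borel_measurable (borel \<Otimes>\<^sub>M borel)" by measurable
  then have m: "?\<Psi> \<in> borel_measurable lborel" by (simp add: borel_prod)
  have "\<bar>?\<Psi> z\<bar> \<le> (B\<kappa> * ((M + \<bar>k\<bar>) * B\<psi>)) * indicator (cbox (a, c) (b, d)) z" for z
  proof (cases "z \<in> cbox (a, c) (b, d)")
    case True
    have "\<bar>u_borel z - k\<bar> \<le> M + \<bar>k\<bar>" using u_borel(2)[of z] by linarith
    then show ?thesis unfolding abs_mult using True B\<kappa> B\<psi> B\<kappa>[of 0]
      by simp (intro mult_mono; auto intro: order_trans[OF abs_ge_zero])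
  next
    case False
    then have "fst z \<notin> {a..b} \<or> snd z \<notin> {c..d}" unfolding cbox_Pair_eq by (cases z) auto
    then show ?thesis using False d\<kappa> \<psi>(2) by auto
  qed
  then show i: "integrable lborel ?\<Psi>"
    by (rule integrable_bounded_by_box[OF m])
  have "integral\<^sup>L lborel ?\<Psi> = (\<integral>s. (\<integral>x. ?\<Psi> (s, x) \<partial>lborel) \<partial>lborel)"
    using lborel_pair.integral_fst'[of ?\<Psi>] i by (simp add: lborel_prod)
  then show "integral\<^sup>L lborel ?\<Psi> = (\<integral>s. deriv \<kappa> s * weighted_distance_borel k \<psi> s \<partial>lborel)"
    by (simp add: weighted_distance_borel_def)
qed

lemma integral_flux_term_le:
  assumes \<kappa>: "smooth \<kappa>" "\<And>s. 0 \<le> \<kappa> s" "\<And>s. \<kappa> s \<le> 1" "a \<le> b" "\<And>s. s \<notin> {a..b} \<Longrightarrow> \<kappa> s = 0"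
    and \<psi>: "smooth \<psi>" "c \<le> d"
    and C: "\<And>v x. \<bar>v\<bar> \<le> M \<Longrightarrow> \<bar>flux_term k \<psi> v x\<bar> \<le> C * indicator {c..d} x"
  shows "integrable lborel (\<lambda>z. \<kappa> (fst z) * flux_term k \<psi> (u_borel z) (snd z))"
    and "(\<integral>z. \<kappa> (fst z) * flux_term k \<psi> (u_borel z) (snd z) \<partial>lborel) \<le> C * (b - a) * (d - c)"
proof -
  let ?\<Psi> = "\<lambda>z. \<kappa> (fst z) * flux_term k \<psi> (u_borel z) (snd z)" and ?Q = "cbox (a, c) (b, d)"
  have [measurable]: "\<kappa> \<in> borel_measurable borel"
    "(\<lambda>z. flux_term k \<psi> (u_borel z) (snd z)) \<in> borel_measurable (borel \<Otimes>\<^sub>M borel)"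
    using borel_measurable_smooth_derivs[OF \<kappa>(1)] borel_measurable_flux_term[OF \<psi>(1)] by simp_all
  have "?\<Psi> \<in> borel_measurable (borel \<Otimes>\<^sub>M borel)" by measurable
  then have m: "?\<Psi> \<in> borel_measurable lborel" by (simp add: borel_prod)
  have bound: "\<bar>?\<Psi> z\<bar> \<le> C * indicator ?Q z" for z
  proof -
    have "\<kappa> (fst z) \<le> indicator {a..b} (fst z)"
      using \<kappa>(3) \<kappa>(5)[of "fst z"] by (cases "fst z \<in> {a..b}") auto
    then have "\<bar>?\<Psi> z\<bar> \<le> indicator {a..b} (fst z) * (C * indicator {c..d} (snd z))"
      unfolding abs_mult using \<kappa>(2)[of "fst z"] C[OF u_borel(2)[of z]] by (intro mult_mono) auto
    then show ?thesis by (simp add: cbox_Pair_eq indicator_times ac_simps)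
  qed
  then show i: "integrable lborel ?\<Psi>"
    by (rule integrable_bounded_by_box[OF m])
  have "integral\<^sup>L lborel ?\<Psi> \<le> (\<integral>z. C * indicator ?Q z \<partial>lborel)"
    by (rule integral_mono[OF i]) (use bound in \<open>auto intro: order_trans[OF abs_ge_self]
        integrable_mult_right integrable_real_indicator emeasure_lborel_cbox_finite\<close>)
  also have "\<dots> = C * (b - a) * (d - c)"
    using \<kappa>(4) \<psi>(2) by (simp add: content_Pair)
  finally show "integral\<^sup>L lborel ?\<Psi> \<le> C * (b - a) * (d - c)" .
qed

lemma entropy_inequality_time_cutoff:
  assumes \<kappa>: "smooth \<kappa>" "\<And>s. 0 \<le> \<kappa> s" "\<And>s. \<kappa> s \<le> 1" "0 < a" "a \<le> b"
      "\<And>s. s \<notin> {a..b} \<Longrightarrow> \<kappa> s = 0"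
    and \<psi>: "smooth \<psi>" "\<And>x. 0 \<le> \<psi> x" "c \<le> d" "\<And>x. x \<notin> {c..d} \<Longrightarrow> \<psi> x = 0"
    and C: "\<And>v x. \<bar>v\<bar> \<le> M \<Longrightarrow> \<bar>flux_term k \<psi> v x\<bar> \<le> C * indicator {c..d} x"
  shows "0 \<le> (\<integral>s. deriv \<kappa> s * weighted_distance_borel k \<psi> s \<partial>lborel) + C * (b - a) * (d - c)"
proof -
  note time = integral_time_derivative_term[where a=a and b=b and c=c and d=d and k=k,
      OF \<kappa>(1,6) \<psi>(1,4)]
  note flux = integral_flux_term_le[where a=a and b=b and c=c and d=d and k=k and C=C,
      OF \<kappa>(1,2,3,5,6) \<psi>(1,3) C]
  have "0 \<le> (\<integral>z. deriv \<kappa> (fst z) * (\<bar>u_borel z - k\<bar> * \<psi> (snd z))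
                 + \<kappa> (fst z) * flux_term k \<psi> (u_borel z) (snd z) \<partial>lborel)"
    by (rule entropy_inequality_product[OF \<kappa>(1,2,4,6) \<psi>(1,2,4)])
  also have "\<dots> = (\<integral>z. deriv \<kappa> (fst z) * (\<bar>u_borel z - k\<bar> * \<psi> (snd z)) \<partial>lborel)
      + (\<integral>z. \<kappa> (fst z) * flux_term k \<psi> (u_borel z) (snd z) \<partial>lborel)"
    by (rule Bochner_Integration.integral_add[OF time(1) flux(1)])
  finally show ?thesis using time(2) flux(2) by linarith
qed

lemma weighted_distance_borel_bounded:
  assumes "smooth \<psi>" "\<And>x. x \<notin> {c..d} \<Longrightarrow> \<psi> x = 0" "c \<le> d"
  obtains B where "\<And>s. \<bar>weighted_distance_borel k \<psi> s\<bar> \<le> B"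
proof -
  obtain B where B: "\<And>x. \<bar>\<psi> x\<bar> \<le> B"
    using smooth_vanishing_outside_bounded[OF assms(1,2)] by blast
  show ?thesis
    by (rule that, rule abs_weighted_distance_borel_le[OF smooth_imp_borel_measurable[OF assms(1)] B assms(2,3)])
qed

lemma mollified_increment_nonneg:
  assumes \<psi>: "smooth \<psi>" "\<And>x. 0 \<le> \<psi> x" "c \<le> d" "\<And>x. x \<notin> {c..d} \<Longrightarrow> \<psi> x = 0"
    and C: "\<And>v x. \<bar>v\<bar> \<le> M \<Longrightarrow> \<bar>flux_term k \<psi> v x\<bar> \<le> C * indicator {c..d} x"
    and h: "0 < h" "h < \<tau>1" "\<tau>1 < \<tau>2"
  shows "0 \<le> (\<integral>s. mollifier \<tau>1 h s * weighted_distance_borel k \<psi> s \<partial>lborel)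
    - (\<integral>s. mollifier \<tau>2 h s * weighted_distance_borel k \<psi> s \<partial>lborel) + C * ((\<tau>2 + h) - (\<tau>1 - h)) * (d - c)"
proof -
  let ?Db = "weighted_distance_borel k \<psi>"
  obtain B where B: "\<And>s. \<bar>?Db s\<bar> \<le> B"
    using weighted_distance_borel_bounded[OF \<psi>(1,4,3)] by blast
  have [measurable]: "?Db \<in> borel_measurable borel"
    by (intro borel_measurable_weighted_distance_borel smooth_imp_borel_measurable \<psi>(1))
  have integrable: "integrable lborel (\<lambda>s. mollifier \<tau> h s * ?Db s)" for \<tau>
    by (rule integrable_mollifier_times[OF h(1) _ B]) measurable
  have "0 \<le> (\<integral>s. deriv (time_cutoff \<tau>1 \<tau>2 h) s * ?Db s \<partial>lborel) + C * ((\<tau>2 + h) - (\<tau>1 - h)) * (d - c)"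
    by (rule entropy_inequality_time_cutoff[OF smooth_time_cutoff _ _ _ _ time_cutoff_eq_0 \<psi> C])
      (use h time_cutoff_bounds in auto)
  also have "(\<integral>s. deriv (time_cutoff \<tau>1 \<tau>2 h) s * ?Db s \<partial>lborel)
      = (\<integral>s. mollifier \<tau>1 h s * ?Db s - mollifier \<tau>2 h s * ?Db s \<partial>lborel)"
    by (simp add: deriv_time_cutoff[OF h(1)] left_diff_distrib)
  also have "\<dots> = (\<integral>s. mollifier \<tau>1 h s * ?Db s \<partial>lborel) - (\<integral>s. mollifier \<tau>2 h s * ?Db s \<partial>lborel)"
    by (rule Bochner_Integration.integral_diff[OF integrable integrable])
  finally show ?thesis .
qed

lemma weighted_distance_increment_le:
  assumes \<psi>: "smooth \<psi>" "\<And>x. 0 \<le> \<psi> x" "0 \<le> c" "c \<le> d" "d \<le> 1" "\<And>x. x \<notin> {c..d} \<Longrightarrow> \<psi> x = 0"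
    and C: "\<And>v x. \<bar>v\<bar> \<le> M \<Longrightarrow> \<bar>flux_term k \<psi> v x\<bar> \<le> C * indicator {c..d} x"
    and \<tau>: "0 < \<tau>1" "\<tau>1 < \<tau>2"
    and lp: "lebesgue_point (weighted_distance k \<psi>) \<tau>1" "lebesgue_point (weighted_distance k \<psi>) \<tau>2"
  shows "weighted_distance k \<psi> \<tau>2 \<le> weighted_distance k \<psi> \<tau>1 + C * (\<tau>2 - \<tau>1) * (d - c)"
proof -
  let ?D = "weighted_distance k \<psi>" and ?Db = "weighted_distance_borel k \<psi>"
  obtain B where B: "\<And>s. \<bar>?Db s\<bar> \<le> B"
    using weighted_distance_borel_bounded[OF \<psi>(1,6,4)] by blast
  have [measurable]: "\<psi> \<in> borel_measurable borel" "?Db \<in> borel_measurable borel"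
    by (intro smooth_imp_borel_measurable borel_measurable_weighted_distance_borel \<psi>(1))+
  have ae: "AE s in lborel. s > 0 \<longrightarrow> ?Db s = ?D s"
    by (rule weighted_distance_borel_ae_eq) (use \<psi>(3,5,6) in \<open>measurable, force\<close>)
  have "((\<lambda>h. (\<integral>s. mollifier \<tau>1 h s * ?Db s \<partial>lborel) - (\<integral>s. mollifier \<tau>2 h s * ?Db s \<partial>lborel)
      + C * ((\<tau>2 + h) - (\<tau>1 - h)) * (d - c))
      \<longlongrightarrow> ?D \<tau>1 - ?D \<tau>2 + C * ((\<tau>2 + 0) - (\<tau>1 - 0)) * (d - c)) (at_right 0)"
    using \<tau> by (intro tendsto_intros mollified_tendsto_lebesgue_point[OF lp(1) _ _ B ae]
        mollified_tendsto_lebesgue_point[OF lp(2) _ _ B ae]) auto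
  moreover have "\<forall>\<^sub>F h in at_right 0. 0 \<le> (\<integral>s. mollifier \<tau>1 h s * ?Db s \<partial>lborel)
      - (\<integral>s. mollifier \<tau>2 h s * ?Db s \<partial>lborel) + C * ((\<tau>2 + h) - (\<tau>1 - h)) * (d - c)"
    using eventually_at_right_real[OF \<tau>(1)]
    by (rule eventually_mono) (use mollified_increment_nonneg[OF \<psi>(1,2,4,6) C] \<tau> in auto)
  ultimately have "0 \<le> ?D \<tau>1 - ?D \<tau>2 + C * ((\<tau>2 + 0) - (\<tau>1 - 0)) * (d - c)"
    by (intro tendsto_lowerbound) auto
  then show ?thesis by simp
qed

end

section \<open>Right continuity at common Lebesgue points\<close>

locale lebesgue_point_setting = bounded_entropy_solution +
  fixes E :: "real set" and t0 :: real
  assumes E_def: "E = common_lebesgue_points u M" and t0_in_E: "t0 \<in> E"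
begin

abbreviation at_right_E :: "real filter" where
  "at_right_E \<equiv> at t0 within (E \<inter> {t0<..})"

lemma eventually_at_right_E:
  "(\<exists>\<delta>>0. \<forall>t\<in>E. t0 < t \<and> t < t0 + \<delta> \<longrightarrow> P t) \<Longrightarrow> eventually P at_right_E"
proof -
  assume "\<exists>\<delta>>0. \<forall>t\<in>E. t0 < t \<and> t < t0 + \<delta> \<longrightarrow> P t"
  then obtain \<delta> where "\<delta> > 0" "\<And>t. t \<in> E \<Longrightarrow> t0 < t \<Longrightarrow> t < t0 + \<delta> \<Longrightarrow> P t" by blast
  then show ?thesis
    unfolding eventually_at by (intro exI[of _ \<delta>]) (auto simp: dist_real_def)
qed

lemma eventually_in_E: "eventually (\<lambda>t. t \<in> E \<and> t0 < t) at_right_E"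
  by (rule eventually_at_right_E) (auto intro: exI[of _ 1])

lemma E_pos: "t \<in> E \<Longrightarrow> 0 < t"
  by (simp add: E_def common_lebesgue_points_def)

lemma lebesgue_point_E:
  "t \<in> E \<Longrightarrow> continuous_on {-M..M} p \<Longrightarrow> set_integrable lebesgue {0..1} f \<Longrightarrow>
   lebesgue_point (\<lambda>t. LINT x:{0..1}|lebesgue. p (u t x) * f x) t"
  by (simp add: E_def common_lebesgue_points_def)

lemma ae_sections_measurable:
  "AE s in lborel. s > 0 \<longrightarrow> (\<lambda>x. indicator {0..1} x *\<^sub>R u s x) \<in> borel_measurable lebesgue"
  using u_borel_sections_ae_eq
proof (rule eventually_mono)
  fix s assume h: "0 < s \<longrightarrow> (AE x in lborel. u_borel (s, x) = u s x)"
  show "0 < s \<longrightarrow> (\<lambda>x. indicator {0..1} x *\<^sub>R u s x) \<in> borel_measurable lebesgue"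
  proof
    assume s: "0 < s"
    have m: "(\<lambda>x. indicator {0..1} x *\<^sub>R u_borel (s, x)) \<in> borel_measurable lebesgue"
      by (intro measurable_completion) (simp add: measurable_lborel1)
    show "(\<lambda>x. indicator {0..1} x *\<^sub>R u s x) \<in> borel_measurable lebesgue"
      using AE_completion[OF h[rule_format, OF s]]
      by (intro borel_measurable_AE[OF m]) (auto elim: eventually_mono)
  qed
qed

(* If the section at t were not measurable, both integrals I1 and I2 below would take the junk
   value 0 at t, which is impossible at a common Lebesgue point since I2 = I1 + 1 a.e. *)
lemma sections_measurable:
  assumes t: "t \<in> E"
  shows "(\<lambda>x. indicator {0..1} x *\<^sub>R u t x) \<in> borel_measurable lebesgue"
proof (rule ccontr)
  assume nm: "(\<lambda>x. indicator {0..1} x *\<^sub>R u t x) \<notin> borel_measurable lebesgue"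
  define I1 where "I1 s = (LINT x:{0..1}|lebesgue. (\<lambda>v. v) (u s x) * (\<lambda>x. 1) x)" for s
  define I2 where "I2 s = (LINT x:{0..1}|lebesgue. (\<lambda>v. v + 1) (u s x) * (\<lambda>x. 1) x)" for s
  have lp: "lebesgue_point I1 t" "lebesgue_point I2 t"
    unfolding I1_def[abs_def] I2_def[abs_def]
    by (intro lebesgue_point_E[OF t] set_integrable_const_Icc continuous_intros)+
  have shift: "AE s in lebesgue. s \<in> {t - t/2..t + t/2} \<longrightarrow> I2 s = I1 s + 1"
    using AE_completion[OF ae_sections_measurable]
  proof (rule eventually_mono)
    fix s assume h: "0 < s \<longrightarrow> (\<lambda>x. indicator {0..1} x *\<^sub>R u s x) \<in> borel_measurable lebesgue"
    show "s \<in> {t - t/2..t + t/2} \<longrightarrow> I2 s = I1 s + 1"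
    proof
      assume "s \<in> {t - t/2..t + t/2}"
      then have True: "s > 0" using E_pos[OF t] by auto
      have i: "set_integrable lebesgue {0..1} (\<lambda>x. u s x)"
        by (rule set_integrable_bounded_Icc) (use h True abs_u_le in auto)
      have "I2 s = (LINT x:{0..1}|lebesgue. u s x) + (LINT x:{0..1::real}|lebesgue. 1)"
        using set_integral_add(2)[OF i set_integrable_const_Icc] by (simp add: I2_def)
      then show "I2 s = I1 s + 1" by (simp add: I1_def set_integral_const_Icc)
    qed
  qed
  have "I2 t = I1 t + 1"
    by (rule lebesgue_point_ae_shift[OF lp _ shift]) (use E_pos[OF t] in auto)
  moreover have "\<not> integrable lebesgue (\<lambda>x. indicator {0..1} x *\<^sub>R (u t x * 1))"
    using nm borel_measurable_integrable by auto
  moreover have "\<not> integrable lebesgue (\<lambda>x. indicator {0..1} x *\<^sub>R ((u t x + 1) * 1))"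
  proof
    assume "integrable lebesgue (\<lambda>x. indicator {0..1} x *\<^sub>R ((u t x + 1) * 1))"
    then have "(\<lambda>x. indicator {0..1} x *\<^sub>R ((u t x + 1) * 1) - indicator {0..1} x) \<in> borel_measurable lebesgue"
      by (intro borel_measurable_diff borel_measurable_indicator borel_measurable_integrable) auto
    moreover have "(\<lambda>x. indicator {0..1} x *\<^sub>R ((u t x + 1) * 1) - indicator {0..1} x)
        = (\<lambda>x. indicator {0..1} x *\<^sub>R u t x)"
      by (auto simp: fun_eq_iff indicator_def)
    ultimately show False using nm by simp
  qed
  ultimately show False
    by (simp add: I1_def I2_def set_lebesgue_integral_def not_integrable_integral_eq)
qed

lemma set_integrable_section:
  fixes H :: "real \<Rightarrow> real \<Rightarrow> real"
  assumes t: "t \<in> E" and H: "case_prod H \<in> borel_measurable borel"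
    and bound: "\<And>v x. \<bar>v\<bar> \<le> M \<Longrightarrow> x \<in> {0..1} \<Longrightarrow> \<bar>H v x\<bar> \<le> B"
  shows "set_integrable lebesgue {0..1} (\<lambda>x. H (u t x) x)"
proof (rule set_integrable_bounded_Icc)
  define U where "U x = indicator {0..1} x *\<^sub>R u t x" for x
  have [measurable]: "U \<in> borel_measurable lebesgue" "(\<lambda>x::real. x) \<in> borel_measurable lebesgue"
    "case_prod H \<in> borel_measurable (borel \<Otimes>\<^sub>M borel)"
    using sections_measurable[OF t] H by (simp_all add: U_def[abs_def] borel_prod measurable_completion)
  have "(\<lambda>x. case_prod H (U x, x)) \<in> borel_measurable lebesgue"
    by measurable
  then have m: "(\<lambda>x. indicator {0..1} x *\<^sub>R case_prod H (U x, x)) \<in> borel_measurable lebesgue"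
    by (intro borel_measurable_scaleR borel_measurable_indicator) auto
  have "(\<lambda>x. indicator {0..1} x *\<^sub>R H (u t x) x) = (\<lambda>x. indicator {0..1} x *\<^sub>R case_prod H (U x, x))"
    by (auto simp: fun_eq_iff U_def indicator_def)
  with m show "(\<lambda>x. indicator {0..1} x *\<^sub>R H (u t x) x) \<in> borel_measurable lebesgue" by (simp only:)
qed (use bound abs_u_le E_pos[OF t] in auto)

lemma set_integrable_abs_u_minus:
  assumes "\<psi> \<in> borel_measurable borel" "\<And>x. x \<in> {0..1} \<Longrightarrow> \<bar>\<psi> x\<bar> \<le> 1" "t \<in> E"
  shows "set_integrable lebesgue {0..1} (\<lambda>x. \<bar>u t x - k\<bar> * \<psi> x)"
proof (rule set_integrable_section[where H="\<lambda>v x. \<bar>v - k\<bar> * \<psi> x" and B="M + \<bar>k\<bar>", OF assms(3)])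
  show "(\<lambda>(v, x). \<bar>v - k\<bar> * \<psi> x) \<in> borel_measurable borel"
    using assms(1) by (simp add: borel_prod[symmetric])
  fix v x :: real assume "\<bar>v\<bar> \<le> M" "x \<in> {0..1}"
  then have "\<bar>v - k\<bar> * \<bar>\<psi> x\<bar> \<le> (M + \<bar>k\<bar>) * 1"
    using assms(2)[of x] by (intro mult_mono) auto
  then show "\<bar>\<bar>v - k\<bar> * \<psi> x\<bar> \<le> M + \<bar>k\<bar>" by (simp add: abs_mult)
qed

lemma lebesgue_point_weighted_distance:
  assumes "t \<in> E" "set_integrable lebesgue {0..1} \<psi>"
  shows "lebesgue_point (weighted_distance k \<psi>) t"
proof -
  have "lebesgue_point (\<lambda>t. LINT x:{0..1}|lebesgue. (\<lambda>v. \<bar>v - k\<bar>) (u t x) * \<psi> x) t"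
    by (rule lebesgue_point_E[OF assms(1) _ assms(2)]) (intro continuous_intros)
  then show ?thesis by (simp add: weighted_distance_def[abs_def])
qed

lemma weighted_distance_indicator_le_plateau:
  assumes t: "t \<in> E" and e: "0 < e"
  shows "weighted_distance k (indicator {a..b}) t
    \<le> weighted_distance k (plateau a b e) t + 2 * e * (M + \<bar>k\<bar>)"
proof -
  let ?B = "M + \<bar>k\<bar>" and ?\<psi> = "plateau a b e"
  have [measurable]: "?\<psi> \<in> borel_measurable borel"
    by (rule smooth_imp_borel_measurable[OF smooth_plateau])
  have i\<psi>: "set_integrable lebesgue {0..1} (\<lambda>x. \<bar>u t x - k\<bar> * ?\<psi> x)"
    by (rule set_integrable_abs_u_minus[OF _ _ t]) (use plateau_bounds in auto)
  have iI: "set_integrable lebesgue {0..1} (\<lambda>x. \<bar>u t x - k\<bar> * indicator {a..b} x)"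
    by (rule set_integrable_abs_u_minus[OF _ _ t]) auto
  have iE: "set_integrable lebesgue {0..1} (\<lambda>x. ?B * (indicator {a..a+e} x + indicator {b-e..b} x))"
    by (intro set_integrable_mult_right set_integral_add(1) set_integrable_indicator_Icc) auto
  have "weighted_distance k (indicator {a..b}) t
      \<le> (LINT x:{0..1}|lebesgue. \<bar>u t x - k\<bar> * ?\<psi> x + ?B * (indicator {a..a+e} x + indicator {b-e..b} x))"
    unfolding weighted_distance_def
  proof (rule set_integral_mono[OF iI set_integral_add(1)[OF i\<psi> iE]])
    fix x
    have "\<bar>u t x - k\<bar> * (indicator {a..b} x - ?\<psi> x) \<le> ?B * (indicator {a..a+e} x + indicator {b-e..b} x)"
    proof (rule mult_mono)
      show "indicator {a..b} x - ?\<psi> x \<le> indicator {a..a+e} x + indicator {b-e..b} x"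
        by (rule indicator_minus_plateau_le[OF e])
      show "0 \<le> indicator {a..b} x - ?\<psi> x"
        using plateau_eq_0[OF e, of x a b] plateau_bounds(2)[of a b e x] by (auto simp: indicator_def)
    qed (use abs_u_le[OF E_pos[OF t], of x] in auto)
    then show "\<bar>u t x - k\<bar> * indicator {a..b} x
        \<le> \<bar>u t x - k\<bar> * ?\<psi> x + ?B * (indicator {a..a+e} x + indicator {b-e..b} x)"
      by (simp add: algebra_simps)
  qed
  also have "\<dots> = weighted_distance k ?\<psi> t
      + ?B * ((LINT x:{0..1}|lebesgue. indicator {a..a+e} x) + (LINT x:{0..1}|lebesgue. indicator {b-e..b} x))"
    by (simp add: weighted_distance_def set_integral_add set_integrable_mult_right i\<psi>
        set_integrable_indicator_Icc set_integral_mult_right)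
  also have "\<dots> \<le> weighted_distance k ?\<psi> t + ?B * (e + e)"
    using set_integral_indicator_Icc_le[of a "a+e"] set_integral_indicator_Icc_le[of "b-e" b] e M_nonneg
    by (intro add_left_mono mult_left_mono add_mono) auto
  finally show ?thesis by (simp add: algebra_simps)
qed

lemma weighted_distance_plateau_le_indicator:
  assumes t: "t \<in> E" and e: "0 < e"
  shows "weighted_distance k (plateau a b e) t \<le> weighted_distance k (indicator {a..b}) t"
  unfolding weighted_distance_def
proof (rule set_integral_mono)
  show "set_integrable lebesgue {0..1} (\<lambda>x. \<bar>u t x - k\<bar> * plateau a b e x)"
    by (rule set_integrable_abs_u_minus[OF _ _ t])
      (use plateau_bounds smooth_imp_borel_measurable[OF smooth_plateau] in auto)
  show "set_integrable lebesgue {0..1} (\<lambda>x. \<bar>u t x - k\<bar> * indicator {a..b} x)"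
    by (rule set_integrable_abs_u_minus[OF _ _ t]) auto
  fix x show "\<bar>u t x - k\<bar> * plateau a b e x \<le> \<bar>u t x - k\<bar> * indicator {a..b} x"
    using plateau_eq_0[OF e, of x a b] plateau_bounds(2)[of a b e x]
    by (cases "x \<in> {a..b}") (auto intro: mult_left_le)
qed

lemma weighted_distance_interval_limsup:
  assumes ab: "0 \<le> a" "a \<le> b" "b \<le> 1" and \<epsilon>: "0 < \<epsilon>"
  shows "\<forall>\<^sub>F t in at_right_E.
    weighted_distance k (indicator {a..b}) t \<le> weighted_distance k (indicator {a..b}) t0 + \<epsilon>"
proof (rule eventually_at_right_E)
  define e where "e = \<epsilon> / (4 * (M + \<bar>k\<bar> + 1))"
  have e: "0 < e" "2 * e * (M + \<bar>k\<bar>) \<le> \<epsilon> / 2"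
    using \<epsilon> M_nonneg by (auto simp: e_def field_simps)
  define \<psi> where "\<psi> = plateau a b e"
  have \<psi>: "smooth \<psi>" "\<And>x. 0 \<le> \<psi> x" "\<And>x. x \<notin> {a..b} \<Longrightarrow> \<psi> x = 0"
    unfolding \<psi>_def using smooth_plateau plateau_bounds plateau_eq_0[OF e(1)] by auto
  have i\<psi>: "set_integrable lebesgue {0..1} \<psi>"
  proof (rule set_integrable_bounded_Icc[where B=1])
    have "(\<lambda>x. indicator {0..1} x *\<^sub>R \<psi> x) \<in> borel_measurable lborel"
      using smooth_imp_borel_measurable[OF \<psi>(1)] by (simp add: measurable_lborel1)
    then show "(\<lambda>x. indicator {0..1} x *\<^sub>R \<psi> x) \<in> borel_measurable lebesgue"
      by (rule measurable_completion)
  qed (use plateau_bounds in \<open>auto simp: \<psi>_def\<close>)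
  obtain C where C: "0 \<le> C" "\<And>v x. \<bar>v\<bar> \<le> M \<Longrightarrow> \<bar>flux_term k \<psi> v x\<bar> \<le> C * indicator {a..b} x"
    using flux_term_bounded[OF \<psi>(1,3)] by blast
  define \<delta> where "\<delta> = \<epsilon> / (2 * (C * (b - a) + 1))"
  have "0 \<le> C * (b - a)" using C ab by simp
  then have \<delta>: "0 < \<delta>" "(C * (b - a) + 1) * \<delta> = \<epsilon> / 2"
    using \<epsilon> by (auto simp: \<delta>_def field_simps)
  show "\<exists>\<delta>>0. \<forall>t\<in>E. t0 < t \<and> t < t0 + \<delta> \<longrightarrow>
      weighted_distance k (indicator {a..b}) t \<le> weighted_distance k (indicator {a..b}) t0 + \<epsilon>"
  proof (intro exI[of _ \<delta>] conjI ballI impI)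
    fix t assume t: "t \<in> E" and tt: "t0 < t \<and> t < t0 + \<delta>"
    have "weighted_distance k \<psi> t \<le> weighted_distance k \<psi> t0 + C * (t - t0) * (b - a)"
      by (rule weighted_distance_increment_le[OF \<psi>(1,2) ab(1,2,3) \<psi>(3) C(2)])
        (use tt E_pos[OF t0_in_E] lebesgue_point_weighted_distance[OF _ i\<psi>] t t0_in_E in auto)
    moreover have "C * (t - t0) * (b - a) \<le> \<epsilon> / 2"
    proof -
      have "C * (t - t0) * (b - a) = (C * (b - a)) * (t - t0)" by simp
      also have "\<dots> \<le> (C * (b - a)) * \<delta>"
        using tt \<open>0 \<le> C * (b - a)\<close> by (intro mult_left_mono) auto
      also have "\<dots> \<le> \<epsilon> / 2" using \<delta> by (simp add: algebra_simps)
      finally show ?thesis .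
    qed
    ultimately show "weighted_distance k (indicator {a..b}) t \<le> weighted_distance k (indicator {a..b}) t0 + \<epsilon>"
      using weighted_distance_indicator_le_plateau[OF t e(1), of k a b]
        weighted_distance_plateau_le_indicator[OF t0_in_E e(1), of k a b] e(2)
      unfolding \<psi>_def by linarith
  qed (use \<delta> in auto)
qed

definition mass :: "real \<Rightarrow> real set \<Rightarrow> real" where
  "mass t T = (LINT x:{0..1}|lebesgue. u t x * indicator T x)"

lemma set_integrable_mass:
  assumes t: "t \<in> E" and T: "T \<in> sets lebesgue"
  shows "set_integrable lebesgue {0..1} (\<lambda>x. u t x * indicator T x)"
proof (rule set_integrable_bounded_Icc[where B=M])
  have "(\<lambda>x. (indicator {0..1} x *\<^sub>R u t x) * indicator T x) \<in> borel_measurable lebesgue"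
    using sections_measurable[OF t] T by (intro borel_measurable_times borel_measurable_indicator) auto
  then show "(\<lambda>x. indicator {0..1} x *\<^sub>R (u t x * indicator T x)) \<in> borel_measurable lebesgue"
    by (simp add: ac_simps)
qed (use abs_u_le[OF E_pos[OF t]] M_nonneg in \<open>auto simp: indicator_def\<close>)

lemma weighted_distance_extreme_levels:
  assumes t: "t \<in> E"
  shows "weighted_distance M (indicator {a..b}) t = M * (LINT x:{0..1}|lebesgue. indicator {a..b} x) - mass t {a..b}"
    and "weighted_distance (-M) (indicator {a..b}) t = mass t {a..b} + M * (LINT x:{0..1}|lebesgue. indicator {a..b} x)"
proof -
  have iu: "set_integrable lebesgue {0..1} (\<lambda>x. u t x * indicator {a..b} x)"
    by (rule set_integrable_mass[OF t]) auto
  have iM: "set_integrable lebesgue {0..1} (\<lambda>x. M * indicator {a..b} x :: real)"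
    by (intro set_integrable_mult_right set_integrable_indicator_Icc) auto
  have "weighted_distance M (indicator {a..b}) t
      = (LINT x:{0..1}|lebesgue. M * indicator {a..b} x - u t x * indicator {a..b} x)"
    unfolding weighted_distance_def
    by (rule set_lebesgue_integral_cong) (use abs_u_le[OF E_pos[OF t]] in \<open>auto simp: abs_le_iff algebra_simps\<close>)
  then show "weighted_distance M (indicator {a..b}) t
      = M * (LINT x:{0..1}|lebesgue. indicator {a..b} x) - mass t {a..b}"
    using set_integral_diff(2)[OF iM iu] by (simp add: mass_def set_integral_mult_right)
  have "weighted_distance (-M) (indicator {a..b}) t
      = (LINT x:{0..1}|lebesgue. u t x * indicator {a..b} x + M * indicator {a..b} x)"
    unfolding weighted_distance_def
  proof (rule set_lebesgue_integral_cong)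
    show "\<forall>x. x \<in> {0..1} \<longrightarrow> \<bar>u t x - - M\<bar> * indicator {a..b} x
        = u t x * indicator {a..b} x + M * indicator {a..b} x"
    proof (intro allI impI)
      fix x
      have "\<bar>u t x - - M\<bar> = u t x + M" using abs_u_le[OF E_pos[OF t], of x] by (simp add: abs_le_iff)
      then show "\<bar>u t x - - M\<bar> * indicator {a..b} x = u t x * indicator {a..b} x + M * indicator {a..b} x"
        by (simp add: algebra_simps)
    qed
  qed auto
  then show "weighted_distance (-M) (indicator {a..b}) t
      = mass t {a..b} + M * (LINT x:{0..1}|lebesgue. indicator {a..b} x)"
    using set_integral_add(2)[OF iu iM] by (simp add: mass_def set_integral_mult_right)
qed

lemma mass_interval_tendsto:
  assumes "0 \<le> a" "a \<le> b" "b \<le> 1"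
  shows "((\<lambda>t. mass t {a..b}) \<longlongrightarrow> mass t0 {a..b}) at_right_E"
proof (rule tendstoI)
  fix \<epsilon> :: real assume "0 < \<epsilon>"
  with weighted_distance_interval_limsup[OF assms, of "\<epsilon> / 2"]
  have "\<forall>\<^sub>F t in at_right_E.
      weighted_distance M (indicator {a..b}) t \<le> weighted_distance M (indicator {a..b}) t0 + \<epsilon> / 2 \<and>
      weighted_distance (-M) (indicator {a..b}) t \<le> weighted_distance (-M) (indicator {a..b}) t0 + \<epsilon> / 2 \<and>
      t \<in> E"
    by (intro eventually_conj) (use eventually_in_E in \<open>auto elim: eventually_mono\<close>)
  then show "\<forall>\<^sub>F t in at_right_E. dist (mass t {a..b}) (mass t0 {a..b}) < \<epsilon>"
    by (rule eventually_mono) (use \<open>0 < \<epsilon>\<close> in \<open>auto simp: dist_real_def abs_less_iff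
        weighted_distance_extreme_levels t0_in_E\<close>)
qed

lemma mass_Icc_tendsto: "((\<lambda>t. mass t {a..b}) \<longlongrightarrow> mass t0 {a..b}) at_right_E"
proof -
  have restrict: "mass t {a..b} = mass t {max a 0..min b 1}" for t
    unfolding mass_def by (rule set_lebesgue_integral_cong) (auto simp: indicator_def)
  show ?thesis unfolding restrict
  proof (cases "max a 0 \<le> min b 1")
    case True then show "((\<lambda>t. mass t {max a 0..min b 1}) \<longlongrightarrow> mass t0 {max a 0..min b 1}) at_right_E"
      by (intro mass_interval_tendsto) auto
  qed (simp add: mass_def)
qed

lemma abs_mass_diff_le:
  assumes t: "t \<in> E" and S: "S \<in> sets lebesgue" and T: "T \<in> sets lebesgue" and "S \<subseteq> T"
  shows "\<bar>mass t T - mass t S\<bar> \<le> M * (LINT x:{0..1}|lebesgue. indicator T x - indicator S x)"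
proof -
  have "mass t T - mass t S = (LINT x:{0..1}|lebesgue. u t x * indicator T x - u t x * indicator S x)"
    unfolding mass_def by (rule set_integral_diff(2)[symmetric, OF set_integrable_mass[OF t T] set_integrable_mass[OF t S]])
  also have "\<bar>\<dots>\<bar> \<le> (LINT x:{0..1}|lebesgue. M * (indicator T x - indicator S x))"
    unfolding set_lebesgue_integral_def
  proof (rule integral_abs_bound_integral)
    show "integrable lebesgue (\<lambda>x. indicator {0..1} x *\<^sub>R (u t x * indicator T x - u t x * indicator S x))"
      using set_integral_diff(1)[OF set_integrable_mass[OF t T] set_integrable_mass[OF t S]]
      by (simp add: set_integrable_def)
    show "integrable lebesgue (\<lambda>x. indicator {0..1} x *\<^sub>R (M * (indicator T x - indicator S x)))"
      using set_integrable_mult_right[where a=M, OF set_integral_diff(1)[OF set_integrable_indicator_Icc[OF T]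
          set_integrable_indicator_Icc[OF S]]]
      by (simp add: set_integrable_def)
    fix x show "\<bar>indicator {0..1} x *\<^sub>R (u t x * indicator T x - u t x * indicator S x)\<bar>
        \<le> indicator {0..1} x *\<^sub>R (M * (indicator T x - indicator S x))"
      using abs_u_le[OF E_pos[OF t], of x] \<open>S \<subseteq> T\<close> by (auto simp: indicator_def)
  qed
  also have "\<dots> = M * (LINT x:{0..1}|lebesgue. indicator T x - indicator S x)"
    by (simp add: set_integral_mult_right)
  finally show ?thesis .
qed

lemma mass_finite_UN:
  fixes f :: "nat \<Rightarrow> real set"
  assumes t: "t \<in> E" and f: "disjoint_family f" "\<And>i. f i \<in> sets lebesgue"
  shows "mass t (\<Union>i<N. f i) = (\<Sum>i<N. mass t (f i))"
proof -
  have "indicator (\<Union>i<N. f i) x = (\<Sum>i<N. indicator (f i) x :: real)" for x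
    using f(1) by (intro indicator_UN_disjoint) (auto simp: disjoint_family_on_def)
  then have "mass t (\<Union>i<N. f i) = (LINT x:{0..1}|lebesgue. (\<Sum>i<N. u t x * indicator (f i) x))"
    by (simp add: mass_def sum_distrib_left)
  also have "\<dots> = (\<Sum>i<N. mass t (f i))"
    unfolding mass_def set_lebesgue_integral_def scaleR_sum_right
    by (rule Bochner_Integration.integral_sum)
      (use set_integrable_mass[OF t f(2)] in \<open>auto simp: set_integrable_def\<close>)
  finally show ?thesis .
qed

lemma mass_UN_tendsto:
  fixes f :: "nat \<Rightarrow> real set"
  assumes f: "disjoint_family f" "\<And>i. f i \<in> sets lebesgue"
    and lim: "\<And>i. ((\<lambda>t. mass t (f i)) \<longlongrightarrow> mass t0 (f i)) at_right_E"
  shows "((\<lambda>t. mass t (\<Union>i. f i)) \<longlongrightarrow> mass t0 (\<Union>i. f i)) at_right_E"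
proof -
  define T where "T = (\<Union>i. f i)"
  define G where "G N = (\<Union>i<N. f i)" for N
  have T: "T \<in> sets lebesgue" and G: "G N \<in> sets lebesgue" "G N \<subseteq> T" for N
    using f(2) by (auto simp: T_def G_def)
  define r where "r N = (LINT x:{0..1}|lebesgue. indicator T x - indicator (G N) x :: real)" for N
  have "r \<longlonglongrightarrow> 0"
    unfolding r_def T_def G_def by (rule set_integral_indicator_UN_tendsto[OF f(2)])
  then have Mr: "(\<lambda>N. M * r N) \<longlonglongrightarrow> 0"
    using tendsto_mult_left[of r 0 sequentially M] by simp
  show ?thesis unfolding T_def[symmetric]
  proof (rule tendsto_uniform_approximation[where g="\<lambda>N t. mass t (G N)"])
    fix N
    have "((\<lambda>t. \<Sum>i<N. mass t (f i)) \<longlongrightarrow> (\<Sum>i<N. mass t0 (f i))) at_right_E"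
      by (intro tendsto_sum lim)
    then show "((\<lambda>t. mass t (G N)) \<longlongrightarrow> mass t0 (G N)) at_right_E"
      unfolding G_def mass_finite_UN[OF t0_in_E f]
      by (rule Lim_transform_eventually) (use eventually_in_E in \<open>auto elim: eventually_mono simp: mass_finite_UN[OF _ f]\<close>)
    show "\<forall>\<^sub>F t in at_right_E. \<bar>mass t T - mass t (G N)\<bar> \<le> M * r N"
      using eventually_in_E
      by (rule eventually_mono) (use abs_mass_diff_le[OF _ G(1) T G(2)] in \<open>simp add: r_def\<close>)
    show "\<bar>mass t0 T - mass t0 (G N)\<bar> \<le> M * r N"
      unfolding r_def by (rule abs_mass_diff_le[OF t0_in_E G(1) T G(2)])
  qed (rule Mr)
qed

lemma mass_borel_tendsto: "S \<in> sets borel \<Longrightarrow> ((\<lambda>t. mass t S) \<longlongrightarrow> mass t0 S) at_right_E"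
proof (induction rule: borel_set_induct)
  case empty then show ?case by (simp add: mass_def)
next
  case (interval a b) show ?case by (rule mass_Icc_tendsto)
next
  case (compl S)
  have S: "S \<in> sets lebesgue" using compl(1) by (intro sets_completionI_sets) simp
  have eq: "mass t (-S) = mass t {0..1} - mass t S" if t: "t \<in> E" for t
  proof -
    have "mass t (-S) = (LINT x:{0..1}|lebesgue. u t x * indicator {0..1} x - u t x * indicator S x)"
      unfolding mass_def by (rule set_lebesgue_integral_cong) (auto simp: indicator_def)
    also have "\<dots> = mass t {0..1} - mass t S" unfolding mass_def
      by (rule set_integral_diff(2)[OF set_integrable_mass[OF t] set_integrable_mass[OF t S]]) auto
    finally show ?thesis .
  qed
  have "((\<lambda>t. mass t {0..1} - mass t S) \<longlongrightarrow> mass t0 {0..1} - mass t0 S) at_right_E"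
    by (intro tendsto_diff mass_Icc_tendsto compl(2))
  then show ?case unfolding eq[OF t0_in_E]
    by (rule Lim_transform_eventually) (use eventually_in_E in \<open>auto elim: eventually_mono simp: eq\<close>)
next
  case (union f)
  then show ?case by (intro mass_UN_tendsto) (auto intro: sets_completionI_sets)
qed

lemma mass_tendsto:
  assumes T: "T \<in> sets lebesgue"
  shows "((\<lambda>t. mass t T) \<longlongrightarrow> mass t0 T) at_right_E"
proof -
  have "(indicator T :: real \<Rightarrow> real) \<in> borel_measurable lebesgue" using T by simp
  from completion_ex_borel_measurable_real[OF this] obtain h where
    h: "h \<in> borel_measurable lborel" "AE x in lborel. (indicator T x :: real) = h x" by blast
  define S where "S = {x. h x = 1}"
  have S: "S \<in> sets borel" unfolding S_def using h(1) by (simp add: measurable_lborel1)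
  have ae: "AE x in lebesgue. indicator T x = (indicator S x :: real)"
    using AE_completion[OF h(2)]
  proof (rule eventually_mono)
    fix x assume "(indicator T x :: real) = h x"
    then show "indicator T x = (indicator S x :: real)"
      by (cases "x \<in> T") (auto simp: S_def indicator_def)
  qed
  have eq: "mass t T = mass t S" if t: "t \<in> E" for t
    unfolding mass_def set_lebesgue_integral_def
  proof (rule integral_cong_AE)
    show "(\<lambda>x. indicator {0..1} x *\<^sub>R (u t x * indicator T x)) \<in> borel_measurable lebesgue"
      using set_integrable_mass[OF t T] by (simp add: set_integrable_def borel_measurable_integrable)
    show "(\<lambda>x. indicator {0..1} x *\<^sub>R (u t x * indicator S x)) \<in> borel_measurable lebesgue"
      using set_integrable_mass[OF t, of S] S
      by (simp add: set_integrable_def borel_measurable_integrable sets_completionI_sets)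
    show "AE x in lebesgue. indicator {0..1} x *\<^sub>R (u t x * indicator T x)
        = indicator {0..1} x *\<^sub>R (u t x * indicator S x)"
      using ae by (rule eventually_mono) simp
  qed
  show ?thesis unfolding eq[OF t0_in_E]
    by (rule Lim_transform_eventually[OF mass_borel_tendsto[OF S]])
      (use eventually_in_E in \<open>auto elim: eventually_mono simp: eq\<close>)
qed

definition sublevel :: "real \<Rightarrow> real set" where
  "sublevel k = {x. indicator {0..1} x * u t0 x < k}"

definition superlevel :: "real \<Rightarrow> real set" where
  "superlevel k = {x. k \<le> indicator {0..1} x * u t0 x}"

lemma sets_sublevel: "sublevel k \<in> sets lebesgue" and sets_superlevel: "superlevel k \<in> sets lebesgue"
proof -
  have [measurable]: "(\<lambda>x. indicator {0..1} x * u t0 x) \<in> borel_measurable lebesgue"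
    using sections_measurable[OF t0_in_E] by simp
  have "{x \<in> space lebesgue. indicator {0..1} x * u t0 x < k} \<in> sets lebesgue"
    "{x \<in> space lebesgue. k \<le> indicator {0..1} x * u t0 x} \<in> sets lebesgue"
    by measurable
  then show "sublevel k \<in> sets lebesgue" "superlevel k \<in> sets lebesgue"
    by (simp_all add: sublevel_def superlevel_def)
qed

lemma integral_level_gap:
  assumes t: "t \<in> E"
  shows "set_integrable lebesgue {0..1} (\<lambda>x. level_gap k d (u t0 x) (u t x))"
    and "(LINT x:{0..1}|lebesgue. level_gap k d (u t0 x) (u t x))
      = weighted_distance k (indicator {0..1}) t + (mass t (sublevel k) - mass t (superlevel (k + d)))
        - k * ((LINT x:{0..1}|lebesgue. indicator (sublevel k) x)
               - (LINT x:{0..1}|lebesgue. indicator (superlevel (k + d)) x))"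
proof -
  let ?Q = "sublevel k" and ?P = "superlevel (k + d)"
  have iA: "set_integrable lebesgue {0..1} (\<lambda>x. \<bar>u t x - k\<bar> * indicator {0..1} x)"
    by (rule set_integrable_abs_u_minus[OF _ _ t]) auto
  have iQ: "set_integrable lebesgue {0..1} (\<lambda>x. u t x * indicator ?Q x)"
    "set_integrable lebesgue {0..1} (\<lambda>x. k * indicator ?Q x)"
    by (intro set_integrable_mass[OF t] set_integrable_mult_right set_integrable_indicator_Icc sets_sublevel)+
  have iP: "set_integrable lebesgue {0..1} (\<lambda>x. u t x * indicator ?P x)"
    "set_integrable lebesgue {0..1} (\<lambda>x. k * indicator ?P x)"
    by (intro set_integrable_mass[OF t] set_integrable_mult_right set_integrable_indicator_Icc sets_superlevel)+
  define G where "G x = \<bar>u t x - k\<bar> * indicator {0..1} x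
      + ((u t x * indicator ?Q x - u t x * indicator ?P x) - (k * indicator ?Q x - k * indicator ?P x))" for x
  have eq: "level_gap k d (u t0 x) (u t x) = G x" if "x \<in> {0..1}" for x
    using that by (simp add: G_def level_gap_def sublevel_def superlevel_def indicator_def algebra_simps)
  have iG: "set_integrable lebesgue {0..1} G"
    unfolding G_def by (intro set_integral_add(1) set_integral_diff(1) iA iQ iP)
  then show "set_integrable lebesgue {0..1} (\<lambda>x. level_gap k d (u t0 x) (u t x))"
    by (subst set_integrable_cong[OF refl refl eq]) auto
  have "(LINT x:{0..1}|lebesgue. level_gap k d (u t0 x) (u t x)) = (LINT x:{0..1}|lebesgue. G x)"
    by (rule set_lebesgue_integral_cong) (auto simp: eq)
  also have "\<dots> = weighted_distance k (indicator {0..1}) t + (mass t ?Q - mass t ?P)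
        - k * ((LINT x:{0..1}|lebesgue. indicator ?Q x) - (LINT x:{0..1}|lebesgue. indicator ?P x))"
    unfolding G_def weighted_distance_def mass_def
    by (simp add: set_integral_add set_integral_diff set_integral_diff(1) iA iQ iP set_integral_mult_right)
      (simp add: algebra_simps)
  finally show "(LINT x:{0..1}|lebesgue. level_gap k d (u t0 x) (u t x))
      = weighted_distance k (indicator {0..1}) t + (mass t ?Q - mass t ?P)
        - k * ((LINT x:{0..1}|lebesgue. indicator ?Q x) - (LINT x:{0..1}|lebesgue. indicator ?P x))" .
qed

lemma level_gap_integral_limsup:
  assumes "0 < \<eta>"
  shows "\<forall>\<^sub>F t in at_right_E. (LINT x:{0..1}|lebesgue. level_gap k d (u t0 x) (u t x))
    \<le> (LINT x:{0..1}|lebesgue. level_gap k d (u t0 x) (u t0 x)) + \<eta>"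
proof -
  define Y where "Y t = mass t (sublevel k) - mass t (superlevel (k + d))" for t
  have "(Y \<longlongrightarrow> Y t0) at_right_E"
    unfolding Y_def by (intro tendsto_diff mass_tendsto sets_sublevel sets_superlevel)
  then have "\<forall>\<^sub>F t in at_right_E. Y t < Y t0 + \<eta> / 2"
    using assms by (intro order_tendstoD(2)) auto
  moreover have "\<forall>\<^sub>F t in at_right_E.
      weighted_distance k (indicator {0..1}) t \<le> weighted_distance k (indicator {0..1}) t0 + \<eta> / 2"
    using assms by (intro weighted_distance_interval_limsup) auto
  ultimately show ?thesis
    using eventually_in_E
  proof eventually_elim
    case (elim t)
    then show ?case
      using integral_level_gap(2)[of t k d] integral_level_gap(2)[OF t0_in_E, of k d]
      by (simp add: Y_def)
  qed
qed

lemma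
  assumes t: "t \<in> E"
  shows set_integrable_sum_level_gaps:
      "set_integrable lebesgue {0..1} (\<lambda>x. \<Sum>j\<in>J. level_gap (k j) d (u t0 x) (u t x))"
    and integral_sum_level_gaps:
      "(LINT x:{0..1}|lebesgue. \<Sum>j\<in>J. level_gap (k j) d (u t0 x) (u t x))
        = (\<Sum>j\<in>J. LINT x:{0..1}|lebesgue. level_gap (k j) d (u t0 x) (u t x))"
proof -
  have eq: "(\<lambda>x. indicator {0..1} x *\<^sub>R (\<Sum>j\<in>J. level_gap (k j) d (u t0 x) (u t x)))
      = (\<lambda>x. \<Sum>j\<in>J. indicator {0..1} x *\<^sub>R level_gap (k j) d (u t0 x) (u t x))"
    by (simp only: scaleR_sum_right)
  have i: "integrable lebesgue (\<lambda>x. indicator {0..1} x *\<^sub>R level_gap (k j) d (u t0 x) (u t x))" for j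
    using integral_level_gap(1)[OF t] by (simp add: set_integrable_def)
  show "set_integrable lebesgue {0..1} (\<lambda>x. \<Sum>j\<in>J. level_gap (k j) d (u t0 x) (u t x))"
    unfolding set_integrable_def eq by (intro Bochner_Integration.integrable_sum i)
  show "(LINT x:{0..1}|lebesgue. \<Sum>j\<in>J. level_gap (k j) d (u t0 x) (u t x))
      = (\<Sum>j\<in>J. LINT x:{0..1}|lebesgue. level_gap (k j) d (u t0 x) (u t x))"
    unfolding set_lebesgue_integral_def eq by (intro Bochner_Integration.integral_sum i)
qed

lemma set_integrable_abs_diff:
  assumes t: "t \<in> E"
  shows "set_integrable lebesgue {0..1} (\<lambda>x. \<bar>u t x - u t0 x\<bar>)"
proof (rule set_integrable_bounded_Icc[where B="2 * M"])
  have "(\<lambda>x. \<bar>indicator {0..1} x *\<^sub>R u t x - indicator {0..1} x *\<^sub>R u t0 x\<bar>) \<in> borel_measurable lebesgue"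
    using sections_measurable[OF t] sections_measurable[OF t0_in_E] by measurable
  moreover have "(\<lambda>x. \<bar>indicator {0..1} x *\<^sub>R u t x - indicator {0..1} x *\<^sub>R u t0 x\<bar>)
      = (\<lambda>x. indicator {0..1} x *\<^sub>R \<bar>u t x - u t0 x\<bar>)"
    by (auto simp: fun_eq_iff indicator_def)
  ultimately show "(\<lambda>x. indicator {0..1} x *\<^sub>R \<bar>u t x - u t0 x\<bar>) \<in> borel_measurable lebesgue"
    by simp
next
  fix x show "\<bar>\<bar>u t x - u t0 x\<bar>\<bar> \<le> 2 * M"
    using abs_u_le[OF E_pos[OF t], of x] abs_u_le[OF E_pos[OF t0_in_E], of x] by (simp add: abs_le_iff)
qed

lemma integral_abs_diff_le_level_gaps:
  assumes t: "t \<in> E" and d: "0 < d"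
  shows "(LINT x:{0..1}|lebesgue. \<bar>u t x - u t0 x\<bar>)
    \<le> d + (\<Sum>j\<le>grid_size M d. LINT x:{0..1}|lebesgue. level_gap (grid_level M d j) d (u t0 x) (u t x))"
proof -
  have "(LINT x:{0..1}|lebesgue. \<bar>u t x - u t0 x\<bar>)
      \<le> (LINT x:{0..1}|lebesgue. d + (\<Sum>j\<le>grid_size M d. level_gap (grid_level M d j) d (u t0 x) (u t x)))"
    using abs_u_le[OF E_pos[OF t0_in_E]]
    by (intro set_integral_mono set_integrable_abs_diff set_integral_add(1) set_integrable_const_Icc
        set_integrable_sum_level_gaps t abs_diff_le_level_gaps d) auto
  also have "\<dots> = d + (\<Sum>j\<le>grid_size M d. LINT x:{0..1}|lebesgue. level_gap (grid_level M d j) d (u t0 x) (u t x))"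
    by (simp add: set_integral_add(2)[OF set_integrable_const_Icc set_integrable_sum_level_gaps[OF t]]
        integral_sum_level_gaps[OF t] set_integral_const_Icc)
  finally show ?thesis .
qed

lemma level_gap_integrals_at_t0_le:
  assumes d: "0 < d"
  shows "(\<Sum>j\<le>grid_size M d. LINT x:{0..1}|lebesgue. level_gap (grid_level M d j) d (u t0 x) (u t0 x)) \<le> d"
proof -
  have "(\<Sum>j\<le>grid_size M d. LINT x:{0..1}|lebesgue. level_gap (grid_level M d j) d (u t0 x) (u t0 x))
      = (LINT x:{0..1}|lebesgue. \<Sum>j\<le>grid_size M d. level_gap (grid_level M d j) d (u t0 x) (u t0 x))"
    by (rule integral_sum_level_gaps[OF t0_in_E, symmetric])
  also have "\<dots> \<le> (LINT x:{0..1::real}|lebesgue. d)"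
    by (rule set_integral_mono[OF set_integrable_sum_level_gaps[OF t0_in_E] set_integrable_const_Icc])
      (use level_gaps_self_le[OF d] abs_u_le[OF E_pos[OF t0_in_E]] in auto)
  finally show ?thesis by (simp add: set_integral_const_Icc)
qed

lemma integral_abs_diff_tendsto: "((\<lambda>t. LINT x:{0..1}|lebesgue. \<bar>u t x - u t0 x\<bar>) \<longlongrightarrow> 0) at_right_E"
proof (rule tendstoI)
  fix \<epsilon> :: real assume "0 < \<epsilon>"
  define d where "d = \<epsilon> / 4"
  define N where "N = grid_size M d"
  define \<eta> where "\<eta> = d / real (Suc N)"
  let ?gap = "\<lambda>j t. LINT x:{0..1}|lebesgue. level_gap (grid_level M d j) d (u t0 x) (u t x)"
  have d: "0 < d" using \<open>0 < \<epsilon>\<close> by (simp add: d_def)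
  have \<eta>: "0 < \<eta>" "real (Suc N) * \<eta> = d"
    using d by (simp_all add: \<eta>_def)
  have "\<forall>\<^sub>F t in at_right_E. \<forall>j\<in>{..N}. ?gap j t \<le> ?gap j t0 + \<eta>"
    by (intro eventually_ball_finite ballI level_gap_integral_limsup \<eta>) auto
  then show "\<forall>\<^sub>F t in at_right_E. dist (LINT x:{0..1}|lebesgue. \<bar>u t x - u t0 x\<bar>) 0 < \<epsilon>"
    using eventually_in_E
  proof eventually_elim
    case (elim t)
    have "(LINT x:{0..1}|lebesgue. \<bar>u t x - u t0 x\<bar>) \<le> d + (\<Sum>j\<le>N. ?gap j t)"
      unfolding N_def using elim d by (intro integral_abs_diff_le_level_gaps) auto
    also have "\<dots> \<le> d + (\<Sum>j\<le>N. ?gap j t0 + \<eta>)"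
      using elim by (intro add_left_mono sum_mono) auto
    also have "\<dots> = d + (\<Sum>j\<le>N. ?gap j t0) + d"
      using \<eta>(2) by (simp add: sum.distrib)
    also have "\<dots> \<le> 3 * d"
      using level_gap_integrals_at_t0_le[OF d] unfolding N_def by simp
    finally have "(LINT x:{0..1}|lebesgue. \<bar>u t x - u t0 x\<bar>) \<le> 3 * d" .
    moreover have "0 \<le> (LINT x:{0..1}|lebesgue. \<bar>u t x - u t0 x\<bar>)"
      unfolding set_lebesgue_integral_def by (rule Bochner_Integration.integral_nonneg) simp
    ultimately show ?case using \<open>0 < \<epsilon>\<close> by (simp add: dist_real_def d_def)
  qed
qed

end

theorem lemma4:
  fixes \<phi> g u0 :: "real \<Rightarrow> real" and u :: "real \<Rightarrow> real \<Rightarrow> real" and M t0 :: real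
    and E :: "real set"
  assumes "continuous_on UNIV \<phi>" and "continuous_on UNIV g" and "mono g"
    and "\<forall>x. u0 (x + 1) = u0 x"
    and "u0 \<in> borel_measurable lebesgue"
    and "\<exists>C. AE x in lebesgue. \<bar>u0 x\<bar> \<le> C"
    and "entropy_solution \<phi> g u0 u"
    and "M = ess_norm_Pi u"
    and "\<forall>t x. t > 0 \<longrightarrow> \<bar>u t x\<bar> \<le> M"
    and "E = common_lebesgue_points u M"
    and "t0 \<in> E"
  shows "((\<lambda>t. LINT x:{0..1}|lebesgue. \<bar>u t x - u t0 x\<bar>) \<longlongrightarrow> 0)
           (at t0 within (E \<inter> {t0<..}))"
proof -
  interpret lebesgue_point_setting \<phi> g u0 u M E t0
    using assms by unfold_locales auto
  show ?thesis by (rule integral_abs_diff_tendsto)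
qed

end
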